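(* Assume $\langle f\rangle_X=0$ and that $\psi$ satisfies (A1) and (A2). Let $u$ be the solution of the atomistic problem and $u^H$ the solution of the HQC problem. Then there exist constants $C_6,C_7$, depending only on $c_\psi,C_\psi,C'_\psi$ and $p$ (independent of $\epsilon$, $H$ and $f$), such that \[ \|u^H-u\|_{L^2}\le (C_6H^2+C_7\epsilon)\|f\|_{L^2}+\|e_{\rm mod}\|_{L^2}. \]
   Context: Let $\epsilon>0$, $N,p$ positive integers with $N/p\in\mathbb N$ and normalization $N\epsilon=1$; $X_i=\epsilon i$, $Y_j=j$. $U^N_{\rm per}(\epsilon\mathbb Z)$: functions $u:\epsilon\mathbb Z\to\mathbb R$ with $u(X_{i+N})=u(X_i)$; $U^N_\#(\epsilon\mathbb Z)$: those with $\langle u\rangle_X:=\frac1N\sum_{i=1}^Nu(X_i)=0$. $\langle u,v\rangle_X=\frac1N\sum_{i=1}^Nu(X_i)v(X_i)$, $Du(X_i)=(u(X_{i+1})-u(X_i))/\epsilon$, $\|u\|_{L^2}=\langle u,u\rangle_X^{1/2}$. $U^p_\#(\epsilon\mathbb Z)$: $p$-periodic functions on $\epsilon\mathbb Z$ with $\sum_{i=1}^p w(X_i)=0$. Two-scale functions $g:\epsilon\mathbb Z\times\mathbb Z\to\mathbb R$ satisfy $g(X_{i+N},Y_j)=g(X_i,Y_j)=g(X_i,Y_{j+p})$; $D_Xg(X_i,Y_j)=(g(X_{i+1},Y_j)-g(X_i,Y_j))/\epsilon$, $\langle g\rangle_Y(X_i)=\frac1p\sum_{j=1}^pg(X_i,Y_j)$,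 $\|g\|_{L^\infty(N,p)}=\max_{1\le i\le N,1\le j\le p}|g|$. $\psi$ is a two-scale function with (A1) $0<c_\psi\le\psi\le C_\psi$ and (A2) $\|D_X\psi\|_{L^\infty(N,p)}\le C'_\psi$. $\psi^\epsilon(X_i)=\psi(X_i,X_i/\epsilon)$, $\psi^0(X_i)=\langle1/\psi(X_i,\cdot)\rangle_Y^{-1}$. $f\in U^N_{\rm per}(\epsilon\mathbb Z)$. Atomistic problem: $u\in U^N_\#(\epsilon\mathbb Z)$ with $\langle\psi^\epsilon Du,Dv\rangle_X=\langle f,v\rangle_X$ for all $v\in U^N_{\rm per}(\epsilon\mathbb Z)$. HQC method: fix indices $1=i_1<\dots<i_K\le N$, $i_{K+1}=N+1$, elements $S_k=\{X_i:i_k\le i<i_{k+1}\}$, $H_k=\epsilon(i_{k+1}-i_k)$, $H=\max_kH_k$. $U^H_{\rm per}$: $v\in U^N_{\rm per}(\epsilon\mathbb Z)$ affine on each $\{X_i:i_k\le i\le i_{k+1}\}$; $U^H_\#=U^H_{\rm per}\cap U^N_\#(\epsilon\mathbb Z)$. In each $S_k$ choose a sampling domain $S_k^{\rm rep}=\{X_i:i_k^{\rm rep}\le i<i_k^{\rm rep}+p\}\subset S_k$ and a collocation index with $X_{i_k^{\rm coll}}\in S_k^{\rm rep}$; $\psi^\epsilon_{{\rm coll},k}(X_i)=\psi(X_{i_k^{\rm coll}},X_i/\epsilon)$, $\langle a,b\rangle_{S_k^{\rm rep}}=\frac1p\sum_{X_i\in S_k^{\rm rep}}a(X_i)b(X_i)$.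 For $v^H\in U^H_{\rm per}$ let $\ell_k$ be the affine function on $\epsilon\mathbb Z$ equal to $v^H$ on $S_k$; $\mathcal R_k(v^H)=\ell_k+w$ with $w\in U^p_\#(\epsilon\mathbb Z)$ such that $\langle\psi^\epsilon_{{\rm coll},k}D(\ell_k+w),Ds\rangle_{S_k^{\rm rep}}=0$ for all $s\in U^p_\#(\epsilon\mathbb Z)$. HQC problem: $u^H\in U^H_\#$ with $\sum_{k=1}^KH_k\langle\psi^\epsilon_{{\rm coll},k}D\mathcal R_k(u^H),D\mathcal R_k(v^H)\rangle_{S_k^{\rm rep}}=\langle f,v^H\rangle_X$ for all $v^H\in U^H_\#$. Modeling error: $e_{\rm mod}=u^H-\tilde u^H$, where $\tilde u^H\in U^H_\#$ solves $\langle\psi^0D\tilde u^H,Dv^H\rangle_X=\langle f,v^H\rangle_X$ for all $v^H\in U^H_\#$. *)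

theory Defs
  imports Complex_Main
begin

text \<open>Lattice points X_i = eps*i with eps = 1/N are encoded by their integer
index i; a function u on eps*Z is a map int => real (u i = u(X_i)).  A two-scale function
g(X_i,Y_j) is a map int => int => real (g i j).  Hence psi^eps(X_i) = psi(X_i, X_i/eps) = g i i.\<close>

definition eps :: "nat \<Rightarrow> real" where
  "eps N = 1 / real N"

definition per :: "int \<Rightarrow> (int \<Rightarrow> real) \<Rightarrow> bool" where
  "per n u \<longleftrightarrow> (\<forall>i. u (i + n) = u i)"

definition avgX :: "nat \<Rightarrow> (int \<Rightarrow> real) \<Rightarrow> real" where
  "avgX N u = (1 / real N) * (\<Sum>i = 1..int N. u i)"

definition ipX :: "nat \<Rightarrow> (int \<Rightarrow> real) \<Rightarrow> (int \<Rightarrow> real) \<Rightarrow> real" where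
  "ipX N u v = (1 / real N) * (\<Sum>i = 1..int N. u i * v i)"

definition normX :: "nat \<Rightarrow> (int \<Rightarrow> real) \<Rightarrow> real" where
  "normX N u = sqrt (ipX N u u)"

definition Dd :: "nat \<Rightarrow> (int \<Rightarrow> real) \<Rightarrow> int \<Rightarrow> real" where
  "Dd N u i = (u (i + 1) - u i) / eps N"

definition UN_per :: "nat \<Rightarrow> (int \<Rightarrow> real) \<Rightarrow> bool" where
  "UN_per N u \<longleftrightarrow> per (int N) u"

definition UN_mean0 :: "nat \<Rightarrow> (int \<Rightarrow> real) \<Rightarrow> bool" where
  "UN_mean0 N u \<longleftrightarrow> UN_per N u \<and> avgX N u = 0"

definition Up_mean0 :: "nat \<Rightarrow> (int \<Rightarrow> real) \<Rightarrow> bool" where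
  "Up_mean0 p w \<longleftrightarrow> per (int p) w \<and> (\<Sum>i = 1..int p. w i) = 0"

definition two_scale :: "nat \<Rightarrow> nat \<Rightarrow> (int \<Rightarrow> int \<Rightarrow> real) \<Rightarrow> bool" where
  "two_scale N p g \<longleftrightarrow> (\<forall>i j. g (i + int N) j = g i j \<and> g i (j + int p) = g i j)"

definition DX :: "nat \<Rightarrow> (int \<Rightarrow> int \<Rightarrow> real) \<Rightarrow> int \<Rightarrow> int \<Rightarrow> real" where
  "DX N g i j = (g (i + 1) j - g i j) / eps N"

definition avgY :: "nat \<Rightarrow> (int \<Rightarrow> int \<Rightarrow> real) \<Rightarrow> int \<Rightarrow> real" where
  "avgY p g i = (1 / real p) * (\<Sum>j = 1..int p. g i j)"

definition Linf_Np :: "nat \<Rightarrow> nat \<Rightarrow> (int \<Rightarrow> int \<Rightarrow> real) \<Rightarrow> real" where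
  "Linf_Np N p g = Max {\<bar>g i j\<bar> | i j. 1 \<le> i \<and> i \<le> int N \<and> 1 \<le> j \<and> j \<le> int p}"

definition psi_eps :: "(int \<Rightarrow> int \<Rightarrow> real) \<Rightarrow> int \<Rightarrow> real" where
  "psi_eps psi i = psi i i"

definition psi0 :: "nat \<Rightarrow> (int \<Rightarrow> int \<Rightarrow> real) \<Rightarrow> int \<Rightarrow> real" where
  "psi0 p psi i = 1 / avgY p (\<lambda>i j. 1 / psi i j) i"

definition mesh :: "nat \<Rightarrow> nat \<Rightarrow> (nat \<Rightarrow> int) \<Rightarrow> bool" where
  "mesh N K idx \<longleftrightarrow> 1 \<le> K \<and> idx 1 = 1 \<and> idx (K + 1) = int N + 1 \<and>
     (\<forall>k \<in> {1..K}. idx k < idx (Suc k))"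

definition Hk :: "nat \<Rightarrow> (nat \<Rightarrow> int) \<Rightarrow> nat \<Rightarrow> real" where
  "Hk N idx k = eps N * real_of_int (idx (Suc k) - idx k)"

definition Hmax :: "nat \<Rightarrow> nat \<Rightarrow> (nat \<Rightarrow> int) \<Rightarrow> real" where
  "Hmax N K idx = Max (Hk N idx ` {1..K})"

definition UH_per :: "nat \<Rightarrow> nat \<Rightarrow> (nat \<Rightarrow> int) \<Rightarrow> (int \<Rightarrow> real) \<Rightarrow> bool" where
  "UH_per N K idx v \<longleftrightarrow> UN_per N v \<and>
     (\<forall>k \<in> {1..K}. \<exists>a b. \<forall>i. idx k \<le> i \<and> i \<le> idx (Suc k) \<longrightarrow>
         v i = a + b * (eps N * real_of_int i))"

definition UH_mean0 :: "nat \<Rightarrow> nat \<Rightarrow> (nat \<Rightarrow> int) \<Rightarrow> (int \<Rightarrow> real) \<Rightarrow> bool" where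
  "UH_mean0 N K idx v \<longleftrightarrow> UH_per N K idx v \<and> UN_mean0 N v"

definition sampling :: "nat \<Rightarrow> nat \<Rightarrow> (nat \<Rightarrow> int) \<Rightarrow> (nat \<Rightarrow> int) \<Rightarrow> (nat \<Rightarrow> int) \<Rightarrow> bool" where
  "sampling p K idx rep coll \<longleftrightarrow> (\<forall>k \<in> {1..K}.
     idx k \<le> rep k \<and> rep k + int p \<le> idx (Suc k) \<and> rep k \<le> coll k \<and> coll k < rep k + int p)"

definition ipRep :: "nat \<Rightarrow> int \<Rightarrow> (int \<Rightarrow> real) \<Rightarrow> (int \<Rightarrow> real) \<Rightarrow> real" where
  "ipRep p r a b = (1 / real p) * (\<Sum>i = r..r + int p - 1. a i * b i)"

definition ell :: "(nat \<Rightarrow> int) \<Rightarrow> nat \<Rightarrow> (int \<Rightarrow> real) \<Rightarrow> int \<Rightarrow> real" where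
  "ell idx k v i = v (idx k) + real_of_int (i - idx k) *
      (v (idx (Suc k)) - v (idx k)) / real_of_int (idx (Suc k) - idx k)"

definition cell_sol :: "nat \<Rightarrow> nat \<Rightarrow> (int \<Rightarrow> real) \<Rightarrow> int \<Rightarrow> (int \<Rightarrow> real) \<Rightarrow> (int \<Rightarrow> real) \<Rightarrow> bool" where
  "cell_sol N p psic r l w \<longleftrightarrow> Up_mean0 p w \<and>
     (\<forall>s. Up_mean0 p s \<longrightarrow>
        ipRep p r (\<lambda>i. psic i * Dd N (\<lambda>j. l j + w j) i) (Dd N s) = 0)"

definition psi_coll :: "(int \<Rightarrow> int \<Rightarrow> real) \<Rightarrow> (nat \<Rightarrow> int) \<Rightarrow> nat \<Rightarrow> int \<Rightarrow> real" where
  "psi_coll psi coll k i = psi (coll k) i"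

definition Rk :: "nat \<Rightarrow> nat \<Rightarrow> (int \<Rightarrow> int \<Rightarrow> real) \<Rightarrow> (nat \<Rightarrow> int) \<Rightarrow> (nat \<Rightarrow> int) \<Rightarrow> (nat \<Rightarrow> int)
    \<Rightarrow> nat \<Rightarrow> (int \<Rightarrow> real) \<Rightarrow> int \<Rightarrow> real" where
  "Rk N p psi idx rep coll k v = (\<lambda>i. ell idx k v i +
      (THE w. cell_sol N p (psi_coll psi coll k) (rep k) (ell idx k v) w) i)"

definition hqc_form :: "nat \<Rightarrow> nat \<Rightarrow> nat \<Rightarrow> (int \<Rightarrow> int \<Rightarrow> real) \<Rightarrow> (nat \<Rightarrow> int) \<Rightarrow> (nat \<Rightarrow> int)
    \<Rightarrow> (nat \<Rightarrow> int) \<Rightarrow> (int \<Rightarrow> real) \<Rightarrow> (int \<Rightarrow> real) \<Rightarrow> real" where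
  "hqc_form N p K psi idx rep coll u v = (\<Sum>k = 1..K. Hk N idx k *
      ipRep p (rep k) (\<lambda>i. psi_coll psi coll k i * Dd N (Rk N p psi idx rep coll k u) i)
                      (Dd N (Rk N p psi idx rep coll k v)))"

end

theory Submission
  imports Defs "HOL-Analysis.L2_Norm"
begin

text \<open>In one dimension the atomistic solution is explicit through its stress
  \<open>\<sigma> = \<psi>\<^sup>\<epsilon> Du\<close>: the equation says \<open>\<sigma>(X\<^sub>i\<^sub>+\<^sub>1) = \<sigma>(X\<^sub>i) - \<epsilon> f(X\<^sub>i\<^sub>+\<^sub>1)\<close>, and since
  \<open>Du = \<sigma>/\<psi>\<^sup>\<epsilon>\<close> sums to zero, \<open>\<sigma>\<close> changes sign and is bounded by \<open>\<parallel>f\<parallel>\<^sub>L\<^sub>1\<close>. The homogenized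
  Galerkin solution \<open>\<tilde>u\<^sup>H\<close> has a constant slope on every element, and Galerkin orthogonality
  ties these slopes, weighted by the element means of \<open>\<psi>\<^sup>0\<close>, to the element means of \<open>\<sigma>\<close>
  up to one common constant \<open>\<lambda>\<close>. Summing the difference of slopes, the error
  \<open>e = \<tilde>u\<^sup>H - u\<close> between two points is made of
  (i) the errors of averaging \<open>\<psi>\<^sup>0\<close> and \<open>\<sigma>\<close> over an element, first order in \<open>H\<close> inside an
  element but cancelling to second order over complete elements;
  (ii) the fast oscillation \<open>\<sigma> (\<langle>1/\<psi>\<rangle>\<^sub>Y - 1/\<psi>\<^sup>\<epsilon>)\<close>, whose partial sums are \<open>O(\<epsilon>)\<close> after
  summation by parts, because \<open>1/\<psi>\<^sup>\<epsilon>\<close> averages to \<open>\<langle>1/\<psi>\<rangle>\<^sub>Y\<close> over every period;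
  (iii) \<open>\<lambda>\<close> times a coarse compliance, and periodicity of \<open>e\<close> bounds \<open>\<lambda>\<close> by (i) and (ii).
  This bounds \<open>e\<close> pointwise by \<open>(H\<^sup>2 + \<epsilon>) \<parallel>f\<parallel>\<close> up to a local term of size \<open>H\<^sup>2 \<parallel>f\<parallel>\<close> in
  \<open>L\<^sup>2\<close>; as \<open>e\<close> has mean zero, this controls \<open>\<parallel>e\<parallel>\<close>. The triangle inequality with
  \<open>e\<^sub>m\<^sub>o\<^sub>d = u\<^sup>H - \<tilde>u\<^sup>H\<close> finishes the proof.\<close>

section \<open>Discrete calculus on the integers\<close>

lemma sum_int_ivl_split:
  fixes a m b :: int
  assumes "a \<le> m" "m \<le> b"
  shows "sum g {a..<b} = sum g {a..<m} + sum g {m..<b}"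
proof -
  have "sum g {a..<b} = sum g ({a..<m} \<union> {m..<b})" using assms by (simp add: ivl_disj_un_two(3))
  also have "\<dots> = sum g {a..<m} + sum g {m..<b}" by (rule sum.union_disjoint) auto
  finally show ?thesis .
qed

lemma sum_int_ivl_last:
  fixes a b :: int
  assumes "a \<le> b"
  shows "sum g {a..<b+1} = sum g {a..<b} + g b"
proof -
  have "{a..<b+1} = insert b {a..<b}" using assms by auto
  then show ?thesis by (simp add: add.commute)
qed

lemma sum_int_ivl_shift: "(\<Sum>i\<in>{a..<b}. g (i + 1)) = sum g {a+1..<b+(1::int)}"
proof -
  have "sum g {a+1..<b+1} = sum g ((\<lambda>i. i + 1) ` {a..<b})" by simp
  also have "\<dots> = (\<Sum>i\<in>{a..<b}. g (i + 1))"
    using sum.reindex[of "\<lambda>i. i + 1" "{a..<b}" g] by (simp add: inj_on_def)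
  finally show ?thesis by (rule sym)
qed

lemma sum_int_telescope:
  fixes g :: "int \<Rightarrow> 'a::ab_group_add"
  assumes "a \<le> b"
  shows "(\<Sum>i\<in>{a..<b}. g (i+1) - g i) = g b - g a"
  using assms
proof (induction b rule: int_ge_induct)
  case base then show ?case by simp
next
  case (step i)
  have "(\<Sum>l\<in>{a..<i+1}. g (l+1) - g l) = (\<Sum>l\<in>{a..<i}. g (l+1) - g l) + (g (i+1) - g i)"
    using step(1) by (rule sum_int_ivl_last)
  then show ?case using step(2) by simp
qed

lemma abs_diff_le_sum_abs_increments:
  fixes g :: "int \<Rightarrow> real"
  assumes "a \<le> b"
  shows "\<bar>g b - g a\<bar> \<le> (\<Sum>i\<in>{a..<b}. \<bar>g (i+1) - g i\<bar>)"
  unfolding sum_int_telescope[OF assms, symmetric] by (rule sum_abs)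

lemma abs_diff_le_of_increment_bound:
  fixes g :: "int \<Rightarrow> real"
  assumes "\<And>i. \<bar>g (i+1) - g i\<bar> \<le> L"
  shows "\<bar>g i - g l\<bar> \<le> L * \<bar>real_of_int (i - l)\<bar>"
proof -
  have ordered: "\<bar>g b - g a\<bar> \<le> L * real_of_int (b - a)" if "a \<le> b" for a b
  proof -
    have "\<bar>g b - g a\<bar> \<le> (\<Sum>i\<in>{a..<b}. \<bar>g (i+1) - g i\<bar>)"
      by (rule abs_diff_le_sum_abs_increments[OF that])
    also have "\<dots> \<le> (\<Sum>i\<in>{a..<b}. L)" by (rule sum_mono) (rule assms)
    also have "\<dots> = L * real_of_int (b - a)" using that by simp
    finally show ?thesis .
  qed
  show ?thesis
  proof (cases "l \<le> i")
    case True then show ?thesis using ordered[OF True] by simp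
  next
    case False then show ?thesis using ordered[of i l] by (simp add: abs_minus_commute)
  qed
qed

lemma affine_of_const_increments:
  fixes V :: "int \<Rightarrow> real"
  assumes "\<And>i. a \<le> i \<Longrightarrow> i < b \<Longrightarrow> V (i+1) - V i = t" "a \<le> i" "i \<le> b"
  shows "V i = V a + t * real_of_int (i - a)"
  using assms(2,3)
proof (induction i rule: int_ge_induct)
  case (step i)
  then show ?case using assms(1)[of i] by (simp add: algebra_simps)
qed simp

lemma sum_int_by_parts:
  fixes s d :: "int \<Rightarrow> 'a::comm_ring"
  assumes "0 \<le> m"
  shows "(\<Sum>i\<in>{1..<m+1}. s i * d i) = s m * (\<Sum>l\<in>{1..<m+1}. d l)
           - (\<Sum>i\<in>{1..<m}. (s (i+1) - s i) * (\<Sum>l\<in>{1..<i+1}. d l))"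
  using assms
proof (induction m rule: int_ge_induct)
  case base then show ?case by simp
next
  case (step m)
  have L: "(\<Sum>i\<in>{1..<m+1+1}. s i * d i) = (\<Sum>i\<in>{1..<m+1}. s i * d i) + s (m+1) * d (m+1)"
    using step(1) sum_int_ivl_last[of 1 "m+1"] by simp
  have D: "(\<Sum>l\<in>{1..<m+1+1}. d l) = (\<Sum>l\<in>{1..<m+1}. d l) + d (m+1)"
    using step(1) sum_int_ivl_last[of 1 "m+1"] by simp
  have R: "(\<Sum>i\<in>{1..<m+1}. (s (i+1) - s i) * (\<Sum>l\<in>{1..<i+1}. d l))
      = (\<Sum>i\<in>{1..<m}. (s (i+1) - s i) * (\<Sum>l\<in>{1..<i+1}. d l)) + (s (m+1) - s m) * (\<Sum>l\<in>{1..<m+1}. d l)"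
    using step(1) by (cases "m = 0") (auto simp: sum_int_ivl_last)
  show ?case unfolding L D R step(2) by (simp add: algebra_simps)
qed

lemma abs_partial_sum_le_by_blocks:
  fixes d :: "int \<Rightarrow> real" and p :: nat
  assumes "1 \<le> p" and "0 \<le> \<delta>"
    and entry: "\<And>i. \<bar>d i\<bar> \<le> B"
    and block: "\<And>a. \<bar>\<Sum>l\<in>{a..<a + int p}. d l\<bar> \<le> real p * \<delta>"
    and "0 \<le> x"
  shows "\<bar>\<Sum>i\<in>{1..<x+1}. d i\<bar> \<le> real_of_int x * \<delta> + real p * B"
  using \<open>0 \<le> x\<close>
proof (induction "nat x" arbitrary: x rule: less_induct)
  case less
  show ?case
  proof (cases "x < int p")
    case True
    have "\<bar>\<Sum>i\<in>{1..<x+1}. d i\<bar> \<le> (\<Sum>i\<in>{1..<x+1}. B)"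
      by (rule order_trans[OF sum_abs sum_mono[OF entry]])
    also have "\<dots> = real_of_int x * B" using less.prems by simp
    also have "\<dots> \<le> real p * B"
      using True less.prems entry[of 0] by (intro mult_right_mono) auto
    finally show ?thesis using less.prems \<open>0 \<le> \<delta>\<close> by (smt (verit) mult_nonneg_nonneg of_int_nonneg)
  next
    case False
    have split: "(\<Sum>i\<in>{1..<x+1}. d i)
        = (\<Sum>i\<in>{1..<(x - int p)+1}. d i) + (\<Sum>l\<in>{x - int p + 1..<(x - int p + 1) + int p}. d l)"
      using False assms(1) by (simp add: sum_int_ivl_split[of 1 "x - int p + 1" "x+1"])
    have "\<bar>\<Sum>i\<in>{1..<(x - int p)+1}. d i\<bar> \<le> real_of_int (x - int p) * \<delta> + real p * B"
      using less.hyps[of "x - int p"] False assms(1) by simp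
    moreover have "real_of_int (x - int p) * \<delta> + real p * \<delta> = real_of_int x * \<delta>"
      by (simp add: algebra_simps)
    ultimately show ?thesis
      using split block[of "x - int p + 1"] by linarith
  qed
qed

lemma weighted_sum_zero_sign_change:
  fixes s b :: "'a \<Rightarrow> real"
  assumes "finite A" "A \<noteq> {}" "\<And>i. i \<in> A \<Longrightarrow> 0 < b i" "(\<Sum>i\<in>A. s i * b i) = 0"
  shows "\<exists>l\<in>A. s l \<le> 0" "\<exists>l\<in>A. 0 \<le> s l"
proof -
  show "\<exists>l\<in>A. s l \<le> 0"
  proof (rule ccontr)
    assume "\<not> ?thesis"
    then have "0 < (\<Sum>i\<in>A. s i * b i)" using assms by (intro sum_pos) auto
    then show False using assms(4) by simp
  qed
  show "\<exists>l\<in>A. 0 \<le> s l"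
  proof (rule ccontr)
    assume "\<not> ?thesis"
    then have "0 < (\<Sum>i\<in>A. - (s i * b i))" using assms by (intro sum_pos) (auto simp: mult_neg_pos)
    then show False using assms(4) by (simp add: sum_negf)
  qed
qed

lemma sum_abs_squared_le_card_mult:
  fixes g :: "'a \<Rightarrow> real"
  shows "(\<Sum>i\<in>A. \<bar>g i\<bar>)\<^sup>2 \<le> real (card A) * (\<Sum>i\<in>A. (g i)\<^sup>2)"
proof (cases "finite A")
  case True
  have "(\<Sum>i\<in>A. \<bar>g i\<bar>) = (\<Sum>i\<in>A. \<bar>(\<lambda>_. 1::real) i\<bar> * \<bar>g i\<bar>)" by simp
  also have "\<dots> \<le> L2_set (\<lambda>_. 1::real) A * L2_set g A" by (rule L2_set_mult_ineq)
  finally have "(\<Sum>i\<in>A. \<bar>g i\<bar>)\<^sup>2 \<le> (L2_set (\<lambda>_. 1::real) A * L2_set g A)\<^sup>2"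
    by (simp add: power_mono sum_nonneg)
  also have "\<dots> = real (card A) * (\<Sum>i\<in>A. (g i)\<^sup>2)"
    unfolding L2_set_def power_mult_distrib by (simp add: sum_nonneg)
  finally show ?thesis .
qed simp

lemma mean_between_bounds:
  fixes g :: "'a \<Rightarrow> real"
  assumes "finite A" "A \<noteq> {}" "\<And>l. l \<in> A \<Longrightarrow> lo \<le> g l \<and> g l \<le> hi"
  shows "lo \<le> sum g A / card A" "sum g A / card A \<le> hi"
proof -
  have n: "0 < real (card A)" using assms by (simp add: card_gt_0_iff)
  have "real (card A) * lo \<le> sum g A" "sum g A \<le> real (card A) * hi"
    using sum_mono[of A "\<lambda>_. lo" g] sum_mono[of A g "\<lambda>_. hi"] assms(3) by auto
  then show "lo \<le> sum g A / card A" "sum g A / card A \<le> hi"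
    using n by (simp_all add: field_simps)
qed

lemma abs_inverse_diff_le:
  fixes x y c :: real
  assumes "0 < c" "c \<le> x" "c \<le> y"
  shows "\<bar>1/x - 1/y\<bar> \<le> \<bar>x - y\<bar> / c\<^sup>2"
proof -
  have "\<bar>1/x - 1/y\<bar> = \<bar>x - y\<bar> / (x*y)" using assms by (simp add: field_simps abs_div abs_mult)
  also have "\<dots> \<le> \<bar>x - y\<bar> / c\<^sup>2"
    using assms by (intro divide_left_mono) (auto simp: power2_eq_square mult_mono)
  finally show ?thesis .
qed

section \<open>Periodic and two-scale sequences\<close>

lemma per_shift_mult:
  assumes "per n g"
  shows "g (i + n * q) = g i"
proof -
  have up: "g (i + n * int m) = g i" for i m
  proof (induction m)
    case (Suc m)
    have "g (i + n * int (Suc m)) = g ((i + n * int m) + n)" by (simp add: algebra_simps)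
    also have "\<dots> = g (i + n * int m)" using assms by (simp add: per_def)
    finally show ?case using Suc by simp
  qed simp
  show ?thesis
  proof (cases "0 \<le> q")
    case True then show ?thesis using up[of i "nat q"] by simp
  next
    case False
    have "g ((i + n * q) + n * int (nat (- q))) = g (i + n * q)" by (rule up)
    then show ?thesis using False by (simp add: algebra_simps)
  qed
qed

lemma per_mult:
  assumes "per n g"
  shows "per (n * m) g"
  unfolding per_def using per_shift_mult[OF assms, of _ m] by blast

lemma residue_in_range:
  fixes n :: int
  assumes "0 < n"
  shows "1 \<le> (i - 1) mod n + 1" "(i - 1) mod n + 1 \<le> n"
proof -
  have "0 \<le> (i - 1) mod n" "(i - 1) mod n < n" using assms by simp_all
  then show "1 \<le> (i - 1) mod n + 1" "(i - 1) mod n + 1 \<le> n" by linarith+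
qed

lemma per_eq_at_residue:
  assumes "per n g"
  shows "g i = g ((i - 1) mod n + 1)"
proof -
  have "(i - 1) mod n + 1 = i + n * (- ((i - 1) div n))"
    by (simp add: algebra_simps minus_mod_eq_mult_div [symmetric])
  then show ?thesis using per_shift_mult[OF assms, of i "- ((i - 1) div n)"] by simp
qed

lemma per_sum_shift:
  fixes g :: "int \<Rightarrow> real"
  assumes "per n g" "0 \<le> n"
  shows "sum g {a..<a+n} = sum g {b..<b+n}"
proof -
  have step: "sum g {x+1..<x+1+n} = sum g {x..<x+n}" for x
  proof -
    have "sum g {x..<x+1+n} = sum g {x..<x+n} + g (x+n)"
      using sum_int_ivl_last[of x "x+n" g] assms(2) by (simp add: ac_simps)
    moreover have "sum g {x..<x+1+n} = g x + sum g {x+1..<x+1+n}"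
      using sum_int_ivl_split[of x "x+1" "x+1+n" g] sum_int_ivl_last[of x x g] assms(2) by simp
    moreover have "g (x+n) = g x" using assms(1) by (simp add: per_def)
    ultimately show ?thesis by linarith
  qed
  have "sum g {a..<a+n} = sum g {0..<0+n}" for a
  proof (induction a rule: int_induct[where k=0])
    case (step1 i) then show ?case using step[of i] by simp
  next
    case (step2 i) then show ?case using step[of "i-1"] by simp
  qed simp
  then show ?thesis by metis
qed

lemma per_sum_telescope:
  fixes g :: "int \<Rightarrow> real"
  assumes "per n g" "0 \<le> n"
  shows "(\<Sum>i\<in>{1..<n+1}. g (i+1) - g i) = 0"
proof -
  have "g (n + 1) = g 1" using assms(1) unfolding per_def by (metis add.commute)
  then show ?thesis using sum_int_telescope[of 1 "n+1" g] assms(2) by simp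
qed

lemma per_sum_by_parts:
  fixes s v :: "int \<Rightarrow> real"
  assumes "per n s" "per n v" "0 \<le> n"
  shows "(\<Sum>i\<in>{1..<n+1}. s i * (v (i+1) - v i)) = (\<Sum>i\<in>{1..<n+1}. (s (i-1) - s i) * v i)"
proof -
  let ?h = "\<lambda>i. s (i-1) * v i"
  have "per n ?h" using assms(1,2) unfolding per_def by (metis add_diff_eq diff_add_eq)
  then have "(\<Sum>i\<in>{1..<n+1}. s i * v (i+1)) = sum ?h {1..<n+1}"
    using sum_int_ivl_shift[of ?h 1 "n+1"] per_sum_shift[of n ?h 2 1] assms(3)
    by (simp add: add.commute)
  then show ?thesis by (simp add: algebra_simps sum_subtractf)
qed

lemma per_eq_0_of_orthogonal:
  fixes g :: "int \<Rightarrow> real"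
  assumes "0 < n" "per n g" "\<And>v. per n v \<Longrightarrow> (\<Sum>i\<in>{1..<n+1}. g i * v i) = 0"
  shows "g i = 0"
proof -
  have "(\<Sum>i\<in>{1..<n+1}. g i * g i) = 0" by (rule assms(3)[OF assms(2)])
  then have "\<forall>i\<in>{1..<n+1}. g i * g i = 0" by (subst (asm) sum_nonneg_eq_0_iff) auto
  then have "g ((i - 1) mod n + 1) = 0" using residue_in_range[OF assms(1)] by auto
  then show ?thesis using per_eq_at_residue[OF assms(2)] by simp
qed

lemma periodic_primitive:
  fixes T :: "int \<Rightarrow> real"
  assumes "0 < n" "(\<Sum>i\<in>{1..<n+1}. T i) = 0"
  obtains V where "per n V" "\<And>i. i \<in> {1..<n+1} \<Longrightarrow> V (i+1) - V i = T i"
proof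
  define V where "V i = (\<Sum>l\<in>{1..<(i - 1) mod n + 1}. T l)" for i
  have "(i + n - 1) mod n = (i - 1) mod n" for i by (metis diff_add_eq mod_add_self2)
  then show "per n V" unfolding per_def V_def by simp
  fix i assume i: "i \<in> {1..<n+1}"
  then have i_mod: "(i - 1) mod n = i - 1" by (simp add: mod_pos_pos_trivial)
  show "V (i+1) - V i = T i"
  proof (cases "i < n")
    case True
    then have "i mod n = i" using i by (simp add: mod_pos_pos_trivial)
    then show ?thesis using i i_mod sum_int_ivl_last[of 1 i T] by (simp add: V_def)
  next
    case False
    then have "i = n" using i by simp
    then show ?thesis
      using i_mod assms sum_int_ivl_last[of 1 n T] by (simp add: V_def)
  qed
qed

lemma two_scale_residue:
  assumes "two_scale N p g"
  shows "g i j = g ((i - 1) mod int N + 1) ((j - 1) mod int p + 1)"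
proof -
  have "per (int N) (\<lambda>i. g i j)" "per (int p) (g ((i - 1) mod int N + 1))"
    using assms by (simp_all add: two_scale_def per_def)
  from per_eq_at_residue[OF this(1)] per_eq_at_residue[OF this(2)] show ?thesis by simp
qed

lemma two_scale_DX:
  assumes "two_scale N p g"
  shows "two_scale N p (DX N g)"
  unfolding two_scale_def DX_def
proof (intro allI conjI)
  fix i j
  have "g (i + int N + 1) j = g (i + 1) j"
    using assms[unfolded two_scale_def, rule_format, of "i+1" j] by (simp add: ac_simps)
  then show "(g (i + int N + 1) j - g (i + int N) j) / eps N = (g (i + 1) j - g i j) / eps N"
    using assms by (simp add: two_scale_def)
  show "(g (i + 1) (j + int p) - g i (j + int p)) / eps N = (g (i + 1) j - g i j) / eps N"
    using assms by (simp add: two_scale_def)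
qed

lemma two_scale_abs_le_Linf_Np:
  assumes "two_scale N p g" "1 \<le> N" "1 \<le> p"
  shows "\<bar>g i j\<bar> \<le> Linf_Np N p g"
proof -
  let ?S = "{\<bar>g i j\<bar> | i j. 1 \<le> i \<and> i \<le> int N \<and> 1 \<le> j \<and> j \<le> int p}"
  have "?S \<subseteq> (\<lambda>(i, j). \<bar>g i j\<bar>) ` ({1..int N} \<times> {1..int p})" by auto
  then have "finite ?S" by (rule finite_subset) auto
  moreover have "\<bar>g ((i - 1) mod int N + 1) ((j - 1) mod int p + 1)\<bar> \<in> ?S"
  proof -
    have "1 \<le> (i - 1) mod int N + 1" "(i - 1) mod int N + 1 \<le> int N"
      "1 \<le> (j - 1) mod int p + 1" "(j - 1) mod int p + 1 \<le> int p"
      using residue_in_range[of "int N"] residue_in_range[of "int p"] assms(2,3) by auto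
    then show ?thesis by blast
  qed
  ultimately have "\<bar>g ((i - 1) mod int N + 1) ((j - 1) mod int p + 1)\<bar> \<le> Linf_Np N p g"
    unfolding Linf_Np_def by (rule Max_ge)
  then show ?thesis by (subst two_scale_residue[OF assms(1)])
qed

lemma normX_diff_triangle:
  "normX N (\<lambda>i. a i - b i) \<le> normX N (\<lambda>i. a i - d i) + normX N (\<lambda>i. d i - b i)"
proof -
  have L2: "normX N g = sqrt (1 / real N) * L2_set g {1..int N}" for g
    unfolding normX_def ipX_def L2_set_def power2_eq_square by (simp only: real_sqrt_mult)
  have "L2_set (\<lambda>i. a i - b i) {1..int N} = L2_set (\<lambda>i. (a i - d i) + (d i - b i)) {1..int N}" by simp
  also have "\<dots> \<le> L2_set (\<lambda>i. a i - d i) {1..int N} + L2_set (\<lambda>i. d i - b i) {1..int N}"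
    by (rule L2_set_triangle_ineq)
  finally show ?thesis unfolding L2 by (simp add: distrib_left[symmetric] mult_left_mono)
qed

lemma ipX_self_le_of_avgX_0:
  assumes "avgX N w = 0"
  shows "ipX N w w \<le> ipX N (\<lambda>i. w i - a) (\<lambda>i. w i - a)"
proof -
  have "(\<Sum>i = 1..int N. (w i - a) * (w i - a))
      = (\<Sum>i = 1..int N. w i * w i) - 2 * a * (\<Sum>i = 1..int N. w i) + (\<Sum>i = 1..int N. a * a)"
    by (simp add: algebra_simps sum.distrib sum_subtractf sum_distrib_left)
  moreover have "(\<Sum>i = 1..int N. w i) = 0 \<or> N = 0" using assms by (simp add: avgX_def)
  ultimately have "(\<Sum>i = 1..int N. w i * w i) \<le> (\<Sum>i = 1..int N. (w i - a) * (w i - a))"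
    by (auto simp: sum_nonneg)
  then show ?thesis unfolding ipX_def by (rule mult_left_mono) simp
qed

locale eps_lattice =
  fixes N :: nat
  assumes N_pos: "1 \<le> N"
begin

lemma eps_pos: "0 < eps N"
  using N_pos by (simp add: eps_def)

lemma eps_mult_N: "eps N * real N = 1"
  using N_pos by (simp add: eps_def)

lemma int_N_pos: "0 < int N"
  using N_pos by simp

lemma ipX_eq_eps_sum: "ipX N a b = eps N * (\<Sum>i\<in>{1..<int N+1}. a i * b i)"
  by (simp add: ipX_def eps_def atLeastLessThanPlusOne_atLeastAtMost_int)

lemma ipX_Dd: "ipX N a (Dd N v) = (\<Sum>i\<in>{1..<int N+1}. a i * (v (i+1) - v i))"
  using eps_pos by (simp add: ipX_eq_eps_sum Dd_def sum_distrib_left)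

end

section \<open>Coarse elements\<close>

locale mesh_partition = eps_lattice +
  fixes K :: nat and idx :: "nat \<Rightarrow> int"
  assumes mesh: "mesh N K idx"
begin

abbreviation elem :: "nat \<Rightarrow> int set" where
  "elem k \<equiv> {idx k..<idx (Suc k)}"

definition nk :: "nat \<Rightarrow> int" where
  "nk k = idx (Suc k) - idx k"

definition elem_mean :: "nat \<Rightarrow> (int \<Rightarrow> real) \<Rightarrow> real" where
  "elem_mean k g = sum g (elem k) / real_of_int (nk k)"

lemma K_pos: "1 \<le> K" and idx_first: "idx 1 = 1" and idx_last: "idx (K+1) = int N + 1"
  and idx_less: "k \<in> {1..K} \<Longrightarrow> idx k < idx (Suc k)"
  using mesh by (auto simp: mesh_def)

lemma idx_mono:
  assumes "1 \<le> k" "k \<le> k'" "k' \<le> K+1"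
  shows "idx k \<le> idx k'"
  using assms(2,3)
proof (induction k' rule: dec_induct)
  case (step m)
  then show ?case using idx_less[of m] assms(1) by fastforce
qed simp

lemma idx_range:
  assumes "1 \<le> k" "k \<le> K+1"
  shows "1 \<le> idx k" "idx k \<le> int N + 1"
  using idx_mono[of 1 k] idx_mono[of k "K+1"] assms idx_first idx_last by auto

lemma elem_subset: "k \<in> {1..K} \<Longrightarrow> elem k \<subseteq> {1..<int N+1}"
  using idx_range[of k] idx_range[of "Suc k"] by auto

lemma elem_in_range:
  assumes "k \<in> {1..K}" "i \<in> elem k"
  shows "1 \<le> i" "i \<le> int N"
  using elem_subset[OF assms(1)] assms(2) by auto

lemma elem_unique:
  assumes "k \<in> {1..K}" "k' \<in> {1..K}" "i \<in> elem k" "i \<in> elem k'"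
  shows "k = k'"
proof (rule ccontr)
  have *: "idx (Suc a) \<le> idx b" if "1 \<le> a" "a < b" "b \<le> K+1" for a b
    using idx_mono[of "Suc a" b] that by simp
  assume "k \<noteq> k'"
  then consider "k < k'" | "k' < k" by linarith
  then show False
    by cases (use *[of k k'] *[of k' k] assms in auto)
qed

lemma elem_mem_iff:
  assumes "k \<in> {1..K}" "k' \<in> {1..K}" "i \<in> elem k'"
  shows "i \<in> elem k \<longleftrightarrow> k = k'"
  using elem_unique[OF assms(1,2) _ assms(3)] assms(3) by blast

lemma sum_over_elements: "sum h {1..<int N+1} = (\<Sum>k\<in>{1..K}. sum h (elem k))"
proof -
  have "sum h {1..<idx m} = (\<Sum>k\<in>{1..<m}. sum h (elem k))" if "1 \<le> m" "m \<le> K+1" for m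
    using that
  proof (induction m rule: dec_induct)
    case (step m)
    have "sum h {1..<idx (Suc m)} = sum h {1..<idx m} + sum h (elem m)"
      using idx_range[of m] idx_mono[of m "Suc m"] step by (intro sum_int_ivl_split) auto
    then show ?case using step by simp
  qed (simp add: idx_first idx_first[unfolded One_nat_def])
  from this[of "K+1"] show ?thesis
    using K_pos idx_last by (simp add: atLeastLessThanSuc_atLeastAtMost)
qed

lemma nk_pos: "k \<in> {1..K} \<Longrightarrow> 0 < nk k"
  using idx_less by (simp add: nk_def)

lemma card_elem: "real (card (elem k)) = real_of_int (nk k)" if "k \<in> {1..K}"
  using nk_pos[OF that] by (simp add: nk_def)

lemma sum_const_elem: "k \<in> {1..K} \<Longrightarrow> (\<Sum>l\<in>elem k. x) = real_of_int (nk k) * x"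
  by (simp only: sum_constant card_elem)

lemma Hk_eq: "Hk N idx k = eps N * real_of_int (nk k)"
  by (simp add: Hk_def nk_def)

lemma Hk_pos: "k \<in> {1..K} \<Longrightarrow> 0 < Hk N idx k"
  using nk_pos eps_pos by (simp add: Hk_eq)

lemma sum_Hk: "(\<Sum>k\<in>{1..K}. Hk N idx k) = 1"
proof -
  have "(\<Sum>k\<in>{1..K}. Hk N idx k) = (\<Sum>k\<in>{1..K}. eps N * (\<Sum>i\<in>elem k. 1))"
    by (rule sum.cong) (simp_all only: Hk_eq sum_const_elem mult_1_right)
  also have "\<dots> = eps N * (\<Sum>i\<in>{1..<int N+1}. 1)"
    by (simp only: sum_over_elements sum_distrib_left)
  also have "\<dots> = 1" using eps_mult_N by simp
  finally show ?thesis .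
qed

lemma Hk_le_Hmax: "k \<in> {1..K} \<Longrightarrow> Hk N idx k \<le> Hmax N K idx"
  unfolding Hmax_def by (rule Max_ge) auto

lemma eps_dist_le_Hk:
  assumes "idx k \<le> i" "i \<le> idx (Suc k)" "idx k \<le> l" "l \<le> idx (Suc k)"
  shows "eps N * \<bar>real_of_int (i - l)\<bar> \<le> Hk N idx k"
proof -
  have "\<bar>real_of_int (i - l)\<bar> \<le> real_of_int (nk k)" using assms by (simp add: nk_def)
  then show ?thesis using eps_pos by (simp add: Hk_eq)
qed

lemma elem_mean_bounds:
  assumes "k \<in> {1..K}" "\<And>l. l \<in> elem k \<Longrightarrow> lo \<le> g l \<and> g l \<le> hi"
  shows "lo \<le> elem_mean k g" "elem_mean k g \<le> hi"
proof -
  have "finite (elem k)" "elem k \<noteq> {}" using idx_less[OF assms(1)] by auto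
  from mean_between_bounds[OF this assms(2)]
  show "lo \<le> elem_mean k g" "elem_mean k g \<le> hi"
    unfolding elem_mean_def card_elem[OF assms(1)] by simp_all
qed

lemma elem_mean_near:
  assumes "k \<in> {1..K}" "\<And>l. l \<in> elem k \<Longrightarrow> \<bar>g l - x\<bar> \<le> \<delta>"
  shows "\<bar>elem_mean k g - x\<bar> \<le> \<delta>"
  using elem_mean_bounds[OF assms(1), of "x - \<delta>" g "x + \<delta>"] assms(2) by (force simp: abs_le_iff)

lemma sum_elem_mean_diff:
  assumes "k \<in> {1..K}"
  shows "(\<Sum>l\<in>elem k. elem_mean k g - g l) = 0"
proof -
  have "(\<Sum>l\<in>elem k. elem_mean k g) = real_of_int (nk k) * elem_mean k g"
    by (rule sum_const_elem[OF assms])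
  then show ?thesis using nk_pos[OF assms] by (simp add: sum_subtractf elem_mean_def)
qed

lemma UH_Dd_const_on_elem:
  assumes "UH_per N K idx v" "k \<in> {1..K}" "i \<in> elem k"
  shows "Dd N v i = Dd N v (idx k)"
proof -
  obtain a b where ab: "\<And>i. idx k \<le> i \<Longrightarrow> i \<le> idx (Suc k) \<Longrightarrow> v i = a + b * (eps N * real_of_int i)"
    using assms(1,2) unfolding UH_per_def by blast
  have "Dd N v j = b" if "j \<in> elem k" for j
    using ab[of j] ab[of "j+1"] that eps_pos by (simp add: Dd_def algebra_simps)
  then show ?thesis using assms(3) idx_less[OF assms(2)] by simp
qed

lemma UH_mean0_with_increments:
  fixes T :: "int \<Rightarrow> real"
  assumes T_sum: "(\<Sum>i\<in>{1..<int N+1}. T i) = 0"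
    and T_const: "\<And>k i. k \<in> {1..K} \<Longrightarrow> i \<in> elem k \<Longrightarrow> T i = T (idx k)"
  obtains v where "UH_mean0 N K idx v" "\<And>i. i \<in> {1..<int N+1} \<Longrightarrow> v (i+1) - v i = T i"
proof -
  obtain V where V_per: "per (int N) V" and V_inc: "\<And>i. i \<in> {1..<int N+1} \<Longrightarrow> V (i+1) - V i = T i"
    using periodic_primitive[OF int_N_pos T_sum] by blast
  define v where "v i = V i - avgX N V" for i
  have "UH_per N K idx v" unfolding UH_per_def UN_per_def
  proof
    show "per (int N) v" using V_per by (simp add: per_def v_def)
    show "\<forall>k\<in>{1..K}. \<exists>a b. \<forall>i. idx k \<le> i \<and> i \<le> idx (Suc k) \<longrightarrow> v i = a + b * (eps N * real_of_int i)"
    proof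
      fix k assume k: "k \<in> {1..K}"
      have "V (i+1) - V i = T (idx k)" if "idx k \<le> i" "i < idx (Suc k)" for i
        using V_inc[of i] T_const[OF k, of i] elem_in_range[OF k, of i] that by simp
      then have "v i = (V (idx k) - T (idx k) * real_of_int (idx k) - avgX N V) + (T (idx k) / eps N) * (eps N * real_of_int i)"
        if "idx k \<le> i" "i \<le> idx (Suc k)" for i
        using affine_of_const_increments[of "idx k" "idx (Suc k)" V "T (idx k)" i] that eps_pos
        by (simp add: v_def algebra_simps)
      then show "\<exists>a b. \<forall>i. idx k \<le> i \<and> i \<le> idx (Suc k) \<longrightarrow> v i = a + b * (eps N * real_of_int i)"
        by blast
    qed
  qed
  moreover have "avgX N v = 0"
    unfolding v_def avgX_def sum_subtractf sum_constant using N_pos by simp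
  ultimately have "UH_mean0 N K idx v" by (simp add: UH_mean0_def UN_mean0_def UH_per_def)
  moreover have "v (i+1) - v i = T i" if i: "i \<in> {1..<int N+1}" for i
    using V_inc[OF i] by (simp add: v_def)
  ultimately show ?thesis using that by blast
qed

lemma elem_mean_eq_of_orthogonal:
  assumes orth: "\<And>v. UH_mean0 N K idx v \<Longrightarrow> (\<Sum>i\<in>{1..<int N+1}. \<rho> i * (v (i+1) - v i)) = 0"
    and k: "k \<in> {1..K}"
  shows "elem_mean k \<rho> = elem_mean 1 \<rho>"
proof -
  have k1: "(1::nat) \<in> {1..K}" using K_pos by simp
  define \<chi> where "\<chi> k i = (if i \<in> elem k then 1 / real_of_int (nk k) else 0)" for k i
  have sum_\<chi>: "(\<Sum>i\<in>{1..<int N+1}. g i * \<chi> k i) = elem_mean k g" if "k \<in> {1..K}" for g k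
  proof -
    have "(\<Sum>i\<in>{1..<int N+1}. g i * \<chi> k i) = (\<Sum>i\<in>elem k. g i * \<chi> k i)"
      using elem_subset[OF that] by (intro sum.mono_neutral_right) (auto simp: \<chi>_def)
    also have "\<dots> = (\<Sum>i\<in>elem k. g i / real_of_int (nk k))"
      by (rule sum.cong) (simp_all add: \<chi>_def)
    finally show ?thesis by (simp add: elem_mean_def sum_divide_distrib)
  qed
  have "elem_mean k (\<lambda>_. 1) = 1" "elem_mean 1 (\<lambda>_. 1) = 1"
    unfolding elem_mean_def sum_const_elem[OF k] sum_const_elem[OF k1] using nk_pos[OF k] nk_pos[OF k1] by simp_all
  then have "(\<Sum>i\<in>{1..<int N+1}. \<chi> 1 i - \<chi> k i) = 0"
    using sum_\<chi>[OF k, of "\<lambda>_. 1"] sum_\<chi>[OF k1, of "\<lambda>_. 1"] by (simp add: sum_subtractf)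
  moreover have "\<chi> 1 i - \<chi> k i = \<chi> 1 (idx k') - \<chi> k (idx k')" if k': "k' \<in> {1..K}" "i \<in> elem k'" for k' i
  proof -
    have "\<chi> k'' i = \<chi> k'' (idx k')" if "k'' \<in> {1..K}" for k''
      unfolding \<chi>_def using elem_mem_iff[OF that k'] elem_mem_iff[OF that k'(1), of "idx k'"] idx_less[OF k'(1)]
      by simp
    then show ?thesis using k1 k by simp
  qed
  ultimately obtain v where v: "UH_mean0 N K idx v"
    "\<And>i. i \<in> {1..<int N+1} \<Longrightarrow> v (i+1) - v i = \<chi> 1 i - \<chi> k i"
    using UH_mean0_with_increments[of "\<lambda>i. \<chi> 1 i - \<chi> k i"] by blast
  have "0 = (\<Sum>i\<in>{1..<int N+1}. \<rho> i * (\<chi> 1 i - \<chi> k i))"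
    using orth[OF v(1)] v(2) by (metis (no_types, lifting) sum.cong)
  also have "\<dots> = elem_mean 1 \<rho> - elem_mean k \<rho>"
    using sum_\<chi>[OF k1, of \<rho>] sum_\<chi>[OF k, of \<rho>] by (simp add: right_diff_distrib sum_subtractf)
  finally show ?thesis by simp
qed

end

section \<open>The two-scale coefficient and its homogenization\<close>

locale two_scale_coefficient = eps_lattice +
  fixes p :: nat and c C C' :: real and psi :: "int \<Rightarrow> int \<Rightarrow> real"
  assumes p_pos: "1 \<le> p" and p_dvd_N: "p dvd N"
    and two_scale: "two_scale N p psi"
    and psi_bounds: "\<And>i j. c \<le> psi i j \<and> psi i j \<le> C" and c_pos: "0 < c"
    and DX_bound: "Linf_Np N p (DX N psi) \<le> C'"
begin

definition inv_psi0 :: "int \<Rightarrow> real" where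
  "inv_psi0 i = avgY p (\<lambda>i j. 1 / psi i j) i"

definition inv_psi_eps :: "int \<Rightarrow> real" where
  "inv_psi_eps i = 1 / psi_eps psi i"

definition inv_psi_defect :: "int \<Rightarrow> real" where
  "inv_psi_defect i = inv_psi0 i - inv_psi_eps i"

definition defect_bound :: real where
  "defect_bound = 2 * real p * C' / c\<^sup>2 + real p / c"

lemma psi_pos: "0 < psi i j"
  using psi_bounds[of i j] c_pos by linarith

lemma C_pos: "0 < C"
  using psi_bounds[of 0 0] c_pos by linarith

lemma psi_diag_per: "per (int N) (\<lambda>i. psi i i)"
proof -
  obtain m where "N = p * m" using p_dvd_N by (rule dvdE)
  then have "int N = int p * int m" by simp
  moreover have "per (int p) (psi i)" "per (int N) (\<lambda>i. psi i j)" for i j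
    using two_scale by (simp_all add: two_scale_def per_def)
  ultimately show ?thesis using per_mult[of "int p" "psi _" "int m"] by (simp add: per_def)
qed

lemma psi_increment_bound: "\<bar>psi (i+1) j - psi i j\<bar> \<le> eps N * C'"
proof -
  have "\<bar>DX N psi i j\<bar> \<le> C'"
    using two_scale_abs_le_Linf_Np[OF two_scale_DX[OF two_scale] N_pos p_pos, of i j] DX_bound by linarith
  then show ?thesis using eps_pos by (simp add: DX_def abs_div field_simps)
qed

lemma C'_nonneg: "0 \<le> C'"
  using order_trans[OF abs_ge_zero psi_increment_bound] eps_pos by (simp add: zero_le_mult_iff)

lemma inv_psi_lipschitz:
  "\<bar>1 / psi i j - 1 / psi l j\<bar> \<le> C' / c\<^sup>2 * eps N * \<bar>real_of_int (i - l)\<bar>"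
proof -
  have "\<bar>1 / psi i j - 1 / psi l j\<bar> \<le> \<bar>psi i j - psi l j\<bar> / c\<^sup>2"
    using psi_bounds c_pos by (intro abs_inverse_diff_le) auto
  also have "\<dots> \<le> eps N * C' * \<bar>real_of_int (i - l)\<bar> / c\<^sup>2"
    using abs_diff_le_of_increment_bound[of "\<lambda>i. psi i j", OF psi_increment_bound]
    by (intro divide_right_mono) auto
  finally show ?thesis by (simp add: mult.commute)
qed

lemma inv_psi0_bounds: "1 / C \<le> inv_psi0 i" "inv_psi0 i \<le> 1 / c"
proof -
  have "1 / C \<le> 1 / psi i j \<and> 1 / psi i j \<le> 1 / c" for j
    using psi_bounds[of i j] c_pos psi_pos[of i j] by (simp add: frac_le)
  then have "1 / C \<le> sum (\<lambda>j. 1 / psi i j) {1..int p} / card {1..int p}"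
    "sum (\<lambda>j. 1 / psi i j) {1..int p} / card {1..int p} \<le> 1 / c"
    using mean_between_bounds[of "{1..int p}" "1 / C" "\<lambda>j. 1 / psi i j" "1 / c"] p_pos by auto
  then show "1 / C \<le> inv_psi0 i" "inv_psi0 i \<le> 1 / c"
    by (simp_all add: inv_psi0_def avgY_def)
qed

lemma inv_psi0_pos: "0 < inv_psi0 i"
  using inv_psi0_bounds(1)[of i] C_pos by (meson less_le_trans zero_less_divide_1_iff)

lemma psi0_eq: "psi0 p psi i = 1 / inv_psi0 i"
  by (simp add: psi0_def inv_psi0_def)

lemma inv_psi0_eq: "inv_psi0 i = 1 / psi0 p psi i"
  by (simp add: psi0_eq)

lemma psi0_bounds: "c \<le> psi0 p psi i" "psi0 p psi i \<le> C"
  using inv_psi0_bounds[of i] inv_psi0_pos[of i] c_pos C_pos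
  by (simp_all add: psi0_eq divide_simps mult.commute)

lemma inv_psi0_lipschitz:
  "\<bar>inv_psi0 i - inv_psi0 l\<bar> \<le> C' / c\<^sup>2 * eps N * \<bar>real_of_int (i - l)\<bar>"
proof -
  have "\<bar>inv_psi0 i - inv_psi0 l\<bar> = \<bar>\<Sum>j\<in>{1..int p}. 1 / psi i j - 1 / psi l j\<bar> / real p"
    by (simp add: inv_psi0_def avgY_def sum_subtractf diff_divide_distrib[symmetric])
  also have "\<dots> \<le> (\<Sum>j\<in>{1..int p}. C' / c\<^sup>2 * eps N * \<bar>real_of_int (i - l)\<bar>) / real p"
    by (intro divide_right_mono order_trans[OF sum_abs sum_mono] inv_psi_lipschitz) auto
  also have "\<dots> = C' / c\<^sup>2 * eps N * \<bar>real_of_int (i - l)\<bar>" using p_pos by simp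
  finally show ?thesis .
qed

lemma psi0_lipschitz:
  "\<bar>psi0 p psi i - psi0 p psi l\<bar> \<le> C\<^sup>2 * C' / c\<^sup>2 * eps N * \<bar>real_of_int (i - l)\<bar>"
proof -
  have "\<bar>psi0 p psi i - psi0 p psi l\<bar> \<le> \<bar>inv_psi0 i - inv_psi0 l\<bar> / (1 / C)\<^sup>2"
    unfolding psi0_eq using inv_psi0_bounds C_pos by (intro abs_inverse_diff_le) auto
  also have "\<dots> \<le> C' / c\<^sup>2 * eps N * \<bar>real_of_int (i - l)\<bar> / (1 / C)\<^sup>2"
    by (intro divide_right_mono inv_psi0_lipschitz) simp
  also have "\<dots> = C\<^sup>2 * C' / c\<^sup>2 * eps N * \<bar>real_of_int (i - l)\<bar>"
    using C_pos by (simp add: field_simps)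
  finally show ?thesis .
qed

lemma inv_psi_eps_bounds: "1 / C \<le> inv_psi_eps i" "inv_psi_eps i \<le> 1 / c" "0 < inv_psi_eps i"
  using psi_bounds[of i i] c_pos psi_pos[of i i]
  by (simp_all add: inv_psi_eps_def psi_eps_def frac_le)

lemma abs_inv_psi_defect_le: "\<bar>inv_psi_defect i\<bar> \<le> 1 / c"
  using inv_psi0_bounds[of i] inv_psi_eps_bounds[of i] C_pos
  unfolding inv_psi_defect_def by (smt (verit) divide_pos_pos)

text \<open>Over one period of the fast variable the diagonal samples \<open>1 / \<psi>(X\<^sub>l, Y\<^sub>l)\<close> run through
  all values \<open>1 / \<psi>(X\<^sub>a, Y\<^sub>j)\<close>, so they average to \<open>\<langle>1/\<psi>(X\<^sub>a,\<cdot>)\<rangle>\<^sub>Y\<close> up to the slow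
  variation of \<open>\<psi>\<close> across the window.\<close>
lemma abs_inv_psi_defect_window_le:
  "\<bar>\<Sum>l\<in>{a..<a + int p}. inv_psi_defect l\<bar> \<le> real p * (2 * real p * eps N * C' / c\<^sup>2)"
proof -
  let ?W = "{a..<a + int p}"
  have "per (int p) (\<lambda>j. 1 / psi a j)" using two_scale by (simp add: two_scale_def per_def)
  then have "real p * inv_psi0 a = (\<Sum>l\<in>?W. 1 / psi a l)"
    using per_sum_shift[of "int p" "\<lambda>j. 1 / psi a j" 1 a] p_pos
    by (simp add: inv_psi0_def avgY_def atLeastLessThanPlusOne_atLeastAtMost_int[symmetric] add.commute)
  then have split: "(\<Sum>l\<in>?W. inv_psi_defect l)
      = (\<Sum>l\<in>?W. inv_psi0 l - inv_psi0 a) + (\<Sum>l\<in>?W. 1 / psi a l - 1 / psi l l)"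
    by (simp add: inv_psi_defect_def inv_psi_eps_def psi_eps_def sum_subtractf)
  have L: "0 \<le> C' / c\<^sup>2 * eps N" using C'_nonneg eps_pos by simp
  have slow: "\<bar>inv_psi0 l - inv_psi0 a\<bar> \<le> C' / c\<^sup>2 * eps N * real p"
    "\<bar>1 / psi a l - 1 / psi l l\<bar> \<le> C' / c\<^sup>2 * eps N * real p" if "l \<in> ?W" for l
  proof -
    have "\<bar>real_of_int (l - a)\<bar> \<le> real p" "\<bar>real_of_int (a - l)\<bar> \<le> real p" using that by auto
    from this(1)[THEN mult_left_mono, OF L] this(2)[THEN mult_left_mono, OF L]
    show "\<bar>inv_psi0 l - inv_psi0 a\<bar> \<le> C' / c\<^sup>2 * eps N * real p"
      "\<bar>1 / psi a l - 1 / psi l l\<bar> \<le> C' / c\<^sup>2 * eps N * real p"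
      using inv_psi0_lipschitz[of l a] inv_psi_lipschitz[of a l l] by linarith+
  qed
  have "\<bar>\<Sum>l\<in>?W. inv_psi_defect l\<bar>
      \<le> (\<Sum>l\<in>?W. \<bar>inv_psi0 l - inv_psi0 a\<bar>) + (\<Sum>l\<in>?W. \<bar>1 / psi a l - 1 / psi l l\<bar>)"
    unfolding split by (rule order_trans[OF abs_triangle_ineq add_mono[OF sum_abs sum_abs]])
  also have "\<dots> \<le> (\<Sum>l\<in>?W. C' / c\<^sup>2 * eps N * real p) + (\<Sum>l\<in>?W. C' / c\<^sup>2 * eps N * real p)"
    by (intro add_mono sum_mono slow)
  also have "\<dots> = real p * (2 * real p * eps N * C' / c\<^sup>2)" by simp
  finally show ?thesis .
qed

lemma abs_inv_psi_defect_partial_sum_le: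
  assumes "0 \<le> x" "x \<le> int N"
  shows "\<bar>\<Sum>i\<in>{1..<x+1}. inv_psi_defect i\<bar> \<le> defect_bound"
proof -
  have "\<bar>\<Sum>i\<in>{1..<x+1}. inv_psi_defect i\<bar>
      \<le> real_of_int x * (2 * real p * eps N * C' / c\<^sup>2) + real p * (1 / c)"
    using C'_nonneg eps_pos assms(1)
    by (intro abs_partial_sum_le_by_blocks[OF p_pos _ abs_inv_psi_defect_le abs_inv_psi_defect_window_le]) auto
  also have "real_of_int x * (2 * real p * eps N * C' / c\<^sup>2) \<le> real N * (2 * real p * eps N * C' / c\<^sup>2)"
    using assms C'_nonneg eps_pos by (intro mult_right_mono) auto
  also have "\<dots> = 2 * real p * C' / c\<^sup>2"
    using eps_mult_N by (simp add: field_simps)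
  finally show ?thesis by (simp add: defect_bound_def)
qed

end

section \<open>The atomistic stress\<close>

locale atomistic_solution = two_scale_coefficient +
  fixes f u :: "int \<Rightarrow> real"
  assumes f_per: "UN_per N f" and u_mean0: "UN_mean0 N u"
    and u_weak: "\<And>v. UN_per N v \<Longrightarrow> ipX N (\<lambda>i. psi_eps psi i * Dd N u i) (Dd N v) = ipX N f v"
begin

definition stress :: "int \<Rightarrow> real" where
  "stress i = psi_eps psi i * Dd N u i"

definition f_L1 :: real where
  "f_L1 = eps N * (\<Sum>i\<in>{1..<int N+1}. \<bar>f i\<bar>)"

lemma u_per: "per (int N) u"
  using u_mean0 by (simp add: UN_mean0_def UN_per_def)

lemma stress_per: "per (int N) stress"
  unfolding per_def
proof
  fix i
  have "u ((i + 1) + int N) = u (i + 1)" "u (i + int N) = u i" "psi (i + int N) (i + int N) = psi i i"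
    using u_per psi_diag_per unfolding per_def by blast+
  moreover have "i + int N + 1 = (i + 1) + int N" by simp
  ultimately show "stress (i + int N) = stress i" by (simp only: stress_def psi_eps_def Dd_def)
qed

lemma stress_weak: "UN_per N v \<Longrightarrow> ipX N stress (Dd N v) = ipX N f v"
  using u_weak unfolding stress_def[abs_def] .

lemma stress_step: "stress (i+1) = stress i - eps N * f (i+1)"
proof -
  define g where "g i = stress (i-1) - stress i - eps N * f i" for i
  have g_per: "per (int N) g"
    using stress_per f_per unfolding per_def UN_per_def g_def by (metis add_diff_eq diff_add_eq)
  have g_orth: "(\<Sum>i\<in>{1..<int N+1}. g i * v i) = 0" if "per (int N) v" for v
  proof -
    have "ipX N stress (Dd N v) = ipX N f v" using stress_weak that by (simp add: UN_per_def)
    then have "(\<Sum>i\<in>{1..<int N+1}. stress i * (v (i+1) - v i)) = eps N * (\<Sum>i\<in>{1..<int N+1}. f i * v i)"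
      by (simp only: ipX_Dd ipX_eq_eps_sum[of f v])
    then have "(\<Sum>i\<in>{1..<int N+1}. (stress (i-1) - stress i) * v i) = (\<Sum>i\<in>{1..<int N+1}. eps N * f i * v i)"
      using per_sum_by_parts[OF stress_per that] int_N_pos by (simp add: sum_distrib_left mult.assoc)
    moreover have "(\<Sum>i\<in>{1..<int N+1}. g i * v i)
        = (\<Sum>i\<in>{1..<int N+1}. (stress (i-1) - stress i) * v i) - (\<Sum>i\<in>{1..<int N+1}. eps N * f i * v i)"
      unfolding g_def by (simp only: left_diff_distrib sum_subtractf)
    ultimately show ?thesis by simp
  qed
  have "g (i+1) = 0" using per_eq_0_of_orthogonal[OF int_N_pos g_per g_orth] .
  then show ?thesis by (simp add: g_def)
qed

lemma Dd_u_eq: "Dd N u i = stress i * inv_psi_eps i"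
  using psi_pos[of i i] by (simp add: stress_def inv_psi_eps_def psi_eps_def)

lemma sum_stress_inv_psi_eps: "(\<Sum>i\<in>{1..<int N+1}. stress i * inv_psi_eps i) = 0"
proof -
  have "(\<Sum>i\<in>{1..<int N+1}. stress i * inv_psi_eps i) = (\<Sum>i\<in>{1..<int N+1}. u (i+1) - u i) / eps N"
    by (simp add: Dd_u_eq[symmetric] Dd_def sum_divide_distrib)
  then show ?thesis using per_sum_telescope[OF u_per] by simp
qed

lemma abs_stress_diff_le:
  assumes "a \<le> b"
  shows "\<bar>stress b - stress a\<bar> \<le> eps N * (\<Sum>i\<in>{a+1..<b+1}. \<bar>f i\<bar>)"
proof -
  have "\<bar>stress b - stress a\<bar> \<le> (\<Sum>i\<in>{a..<b}. \<bar>stress (i+1) - stress i\<bar>)"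
    by (rule abs_diff_le_sum_abs_increments[OF assms])
  also have "\<dots> = eps N * (\<Sum>i\<in>{a..<b}. \<bar>f (i+1)\<bar>)"
    using eps_pos by (simp add: stress_step abs_mult sum_distrib_left)
  finally show ?thesis using sum_int_ivl_shift[of "\<lambda>i. \<bar>f i\<bar>" a b] by simp
qed

lemma f_L1_nonneg: "0 \<le> f_L1"
  using eps_pos by (simp add: f_L1_def sum_nonneg)

text \<open>Since \<open>\<Sum> stress \<cdot> inv_psi_eps = 0\<close> with positive weights, the stress changes sign in
  a period, and its total variation there is at most \<open>f_L1\<close>.\<close>
lemma abs_stress_le: "\<bar>stress i\<bar> \<le> f_L1"
proof -
  have osc: "\<bar>stress a - stress b\<bar> \<le> f_L1" if "a \<in> {1..<int N+1}" "b \<in> {1..<int N+1}" for a b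
  proof -
    have ord: "\<bar>stress y - stress x\<bar> \<le> f_L1" if "1 \<le> x" "x \<le> y" "y \<le> int N" for x y
    proof -
      have "\<bar>stress y - stress x\<bar> \<le> eps N * (\<Sum>i\<in>{x+1..<y+1}. \<bar>f i\<bar>)"
        using abs_stress_diff_le that by simp
      also have "\<dots> \<le> f_L1"
        unfolding f_L1_def using that eps_pos by (intro mult_left_mono sum_mono2) auto
      finally show ?thesis .
    qed
    show ?thesis
    proof (cases "a \<le> b")
      case True then show ?thesis using ord[of a b] that by (simp add: abs_minus_commute)
    next
      case False then show ?thesis using ord[of b a] that by simp
    qed
  qed
  have "finite {1..<int N+1}" "{1..<int N+1} \<noteq> {}" using int_N_pos by auto
  from weighted_sum_zero_sign_change[OF this _ sum_stress_inv_psi_eps] inv_psi_eps_bounds(3)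
  obtain l1 l2 where l: "l1 \<in> {1..<int N+1}" "stress l1 \<le> 0" "l2 \<in> {1..<int N+1}" "0 \<le> stress l2"
    by blast
  define i0 where "i0 = (i - 1) mod int N + 1"
  have "i0 \<in> {1..<int N+1}" using residue_in_range[OF int_N_pos] by (simp add: i0_def)
  then have "\<bar>stress i0\<bar> \<le> f_L1" using osc[of i0 l1] osc[of i0 l2] l by linarith
  then show ?thesis using per_eq_at_residue[OF stress_per, of i] by (simp add: i0_def)
qed

lemma normX_eq_sqrt: "normX N g = sqrt (eps N * (\<Sum>i\<in>{1..<int N+1}. (g i)\<^sup>2))"
  by (simp add: normX_def ipX_eq_eps_sum power2_eq_square)

lemma f_L1_le_normX: "f_L1 \<le> normX N f"
proof -
  have "f_L1\<^sup>2 = (eps N)\<^sup>2 * (\<Sum>i\<in>{1..<int N+1}. \<bar>f i\<bar>)\<^sup>2" by (simp add: f_L1_def power_mult_distrib)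
  also have "\<dots> \<le> (eps N)\<^sup>2 * (real (card {1..<int N+1}) * (\<Sum>i\<in>{1..<int N+1}. (f i)\<^sup>2))"
    by (intro mult_left_mono sum_abs_squared_le_card_mult) auto
  also have "\<dots> = eps N * (\<Sum>i\<in>{1..<int N+1}. (f i)\<^sup>2)"
    using eps_mult_N by (simp add: power2_eq_square)
  finally show ?thesis unfolding normX_eq_sqrt using f_L1_nonneg by (simp add: real_le_rsqrt)
qed

text \<open>The fast oscillation of the coefficient only enters through sums of \<open>stress \<cdot> inv_psi_defect\<close>;
  summation by parts trades them for the bounded partial sums of \<open>inv_psi_defect\<close> and the
  \<open>O(\<epsilon>)\<close> increments of the stress.\<close>
lemma abs_stress_defect_sum_le:
  assumes "1 \<le> j" "j \<le> int N + 1"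
  shows "\<bar>eps N * (\<Sum>i\<in>{1..<j}. stress i * inv_psi_defect i)\<bar> \<le> 2 * eps N * f_L1 * defect_bound"
proof -
  define m where "m = j - 1"
  have m: "0 \<le> m" "m \<le> int N" "j = m + 1" using assms by (auto simp: m_def)
  let ?D = "\<lambda>x. \<Sum>l\<in>{1..<x+1}. inv_psi_defect l"
  have D: "\<bar>?D x\<bar> \<le> defect_bound" if "0 \<le> x" "x \<le> int N" for x
    using abs_inv_psi_defect_partial_sum_le that by blast
  have Db: "0 \<le> defect_bound" using D[of 0] by simp
  have "\<bar>\<Sum>i\<in>{1..<m+1}. stress i * inv_psi_defect i\<bar>
      \<le> \<bar>stress m * ?D m\<bar> + \<bar>\<Sum>i\<in>{1..<m}. (stress (i+1) - stress i) * ?D i\<bar>"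
    unfolding sum_int_by_parts[OF m(1)] by (rule abs_triangle_ineq4)
  also have "\<bar>stress m * ?D m\<bar> \<le> f_L1 * defect_bound"
    unfolding abs_mult using abs_stress_le[of m] D[OF m(1,2)] f_L1_nonneg by (intro mult_mono) auto
  also have "\<bar>\<Sum>i\<in>{1..<m}. (stress (i+1) - stress i) * ?D i\<bar> \<le> (\<Sum>i\<in>{1..<m}. eps N * \<bar>f (i+1)\<bar> * defect_bound)"
  proof (rule order_trans[OF sum_abs sum_mono])
    fix i assume "i \<in> {1..<m}"
    then have "\<bar>?D i\<bar> \<le> defect_bound" using m by (intro D) auto
    then show "\<bar>(stress (i+1) - stress i) * ?D i\<bar> \<le> eps N * \<bar>f (i+1)\<bar> * defect_bound"
      using eps_pos by (simp add: stress_step abs_mult mult_left_mono)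
  qed
  also have "\<dots> = eps N * (\<Sum>i\<in>{1..<m}. \<bar>f (i+1)\<bar>) * defect_bound"
    by (simp add: sum_distrib_left sum_distrib_right mult.assoc)
  also have "(\<Sum>i\<in>{1..<m}. \<bar>f (i+1)\<bar>) = (\<Sum>i\<in>{2..<m+1}. \<bar>f i\<bar>)"
    using sum_int_ivl_shift[of "\<lambda>i. \<bar>f i\<bar>" 1 m] by simp
  also have "eps N * (\<Sum>i\<in>{2..<m+1}. \<bar>f i\<bar>) * defect_bound \<le> f_L1 * defect_bound"
    unfolding f_L1_def using m eps_pos Db by (intro mult_right_mono mult_left_mono sum_mono2) auto
  finally have "\<bar>\<Sum>i\<in>{1..<m+1}. stress i * inv_psi_defect i\<bar> \<le> 2 * f_L1 * defect_bound" by simp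
  then show ?thesis using eps_pos m(3) by (simp add: abs_mult mult_left_mono)
qed

end

section \<open>Error of the homogenized Galerkin solution\<close>

definition error_const_H :: "real \<Rightarrow> real \<Rightarrow> real \<Rightarrow> real" where
  "error_const_H c C C' = 2 * ((((C\<^sup>2 * C' / c\<^sup>2)\<^sup>2 / c^3 + C' / c\<^sup>2) * (1 + C / c) + C\<^sup>2 * C' / c\<^sup>2 / c\<^sup>2)) + 2 / c"

definition error_const_eps :: "nat \<Rightarrow> real \<Rightarrow> real \<Rightarrow> real \<Rightarrow> real" where
  "error_const_eps p c C C' = 4 * (2 * real p * C' / c\<^sup>2 + real p / c) * (1 + C / c)"

locale homogenized_error = atomistic_solution + mesh_partition +
  fixes utH :: "int \<Rightarrow> real"
  assumes utH_mean0: "UH_mean0 N K idx utH"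
    and utH_weak: "\<And>v. UH_mean0 N K idx v \<Longrightarrow>
        ipX N (\<lambda>i. psi0 p psi i * Dd N utH i) (Dd N v) = ipX N f v"
begin

definition slope :: "nat \<Rightarrow> real" where
  "slope k = Dd N utH (idx k)"

definition residual :: "int \<Rightarrow> real" where
  "residual i = psi0 p psi i * Dd N utH i - stress i"

definition resid_mean :: real where
  "resid_mean = elem_mean 1 residual"

definition psi0_mean :: "nat \<Rightarrow> real" where
  "psi0_mean k = elem_mean k (psi0 p psi)"

definition stress_mean :: "nat \<Rightarrow> real" where
  "stress_mean k = elem_mean k stress"

definition f_L1_elem :: "nat \<Rightarrow> real" where
  "f_L1_elem k = eps N * (\<Sum>i\<in>elem k. \<bar>f i\<bar>)"

lemma Dd_utH_on_elem:
  assumes "k \<in> {1..K}" "i \<in> elem k"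
  shows "Dd N utH i = slope k"
  unfolding slope_def using utH_mean0 by (intro UH_Dd_const_on_elem assms) (simp add: UH_mean0_def)

lemma residual_orthogonal:
  assumes "UH_mean0 N K idx v"
  shows "(\<Sum>i\<in>{1..<int N+1}. residual i * (v (i+1) - v i)) = 0"
proof -
  have "UN_per N v" using assms by (simp add: UH_mean0_def UH_per_def)
  then have "ipX N (\<lambda>i. psi0 p psi i * Dd N utH i) (Dd N v) = ipX N stress (Dd N v)"
    using utH_weak[OF assms] stress_weak by simp
  then show ?thesis unfolding ipX_Dd residual_def left_diff_distrib sum_subtractf by simp
qed

lemma elem_mean_residual: "k \<in> {1..K} \<Longrightarrow> elem_mean k residual = resid_mean"
  unfolding resid_mean_def by (rule elem_mean_eq_of_orthogonal[OF residual_orthogonal])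

lemma psi0_mean_bounds: "k \<in> {1..K} \<Longrightarrow> c \<le> psi0_mean k \<and> psi0_mean k \<le> C"
  using elem_mean_bounds[of k c "psi0 p psi" C] psi0_bounds by (simp add: psi0_mean_def)

lemma psi0_mean_pos: "k \<in> {1..K} \<Longrightarrow> 0 < psi0_mean k"
  using psi0_mean_bounds[of k] c_pos by linarith

lemma slope_eq:
  assumes k: "k \<in> {1..K}"
  shows "slope k = (stress_mean k + resid_mean) / psi0_mean k"
proof -
  have "elem_mean k residual = elem_mean k (\<lambda>i. slope k * psi0 p psi i - stress i)"
    unfolding elem_mean_def residual_def using Dd_utH_on_elem[OF k]
    by (intro arg_cong2[where f = "(/)"] sum.cong) (auto simp: mult.commute)
  also have "\<dots> = slope k * psi0_mean k - stress_mean k"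
    by (simp add: elem_mean_def psi0_mean_def stress_mean_def sum_subtractf sum_distrib_left
        diff_divide_distrib)
  finally show ?thesis
    using elem_mean_residual[OF k] psi0_mean_pos[OF k] by (simp add: field_simps)
qed

lemma psi0_mean_near:
  assumes k: "k \<in> {1..K}" and i: "i \<in> elem k"
  shows "\<bar>psi0_mean k - psi0 p psi i\<bar> \<le> C\<^sup>2 * C' / c\<^sup>2 * Hk N idx k"
  unfolding psi0_mean_def
proof (rule elem_mean_near[OF k])
  fix l assume "l \<in> elem k"
  then have "eps N * \<bar>real_of_int (l - i)\<bar> \<le> Hk N idx k"
    using i by (intro eps_dist_le_Hk) auto
  moreover have "0 \<le> C\<^sup>2 * C' / c\<^sup>2" using C'_nonneg by simp
  ultimately have "C\<^sup>2 * C' / c\<^sup>2 * (eps N * \<bar>real_of_int (l - i)\<bar>) \<le> C\<^sup>2 * C' / c\<^sup>2 * Hk N idx k"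
    by (rule mult_left_mono)
  then show "\<bar>psi0 p psi l - psi0 p psi i\<bar> \<le> C\<^sup>2 * C' / c\<^sup>2 * Hk N idx k"
    using psi0_lipschitz[of l i] by (simp add: mult.assoc)
qed

lemma abs_stress_diff_elem_le:
  assumes "i \<in> elem k" "l \<in> elem k"
  shows "\<bar>stress l - stress i\<bar> \<le> f_L1_elem k"
proof -
  have ord: "\<bar>stress y - stress x\<bar> \<le> f_L1_elem k" if "idx k \<le> x" "x \<le> y" "y < idx (Suc k)" for x y
  proof -
    have "\<bar>stress y - stress x\<bar> \<le> eps N * (\<Sum>i\<in>{x+1..<y+1}. \<bar>f i\<bar>)"
      using abs_stress_diff_le that by simp
    also have "\<dots> \<le> f_L1_elem k"
      unfolding f_L1_elem_def using that eps_pos by (intro mult_left_mono sum_mono2) auto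
    finally show ?thesis .
  qed
  show ?thesis
  proof (cases "i \<le> l")
    case True then show ?thesis using ord[of i l] assms by simp
  next
    case False then show ?thesis using ord[of l i] assms by (simp add: abs_minus_commute)
  qed
qed

lemma stress_mean_near:
  "k \<in> {1..K} \<Longrightarrow> i \<in> elem k \<Longrightarrow> \<bar>stress_mean k - stress i\<bar> \<le> f_L1_elem k"
  unfolding stress_mean_def by (rule elem_mean_near) (auto intro: abs_stress_diff_elem_le)

lemma abs_stress_mean_le: "k \<in> {1..K} \<Longrightarrow> \<bar>stress_mean k\<bar> \<le> f_L1"
  using elem_mean_near[of k stress 0 f_L1] abs_stress_le by (simp add: stress_mean_def)

lemma f_L1_elem_nonneg: "0 \<le> f_L1_elem k"
  using eps_pos by (simp add: f_L1_elem_def sum_nonneg)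

lemma sum_f_L1_elem: "(\<Sum>k\<in>{1..K}. f_L1_elem k) = f_L1"
  unfolding f_L1_elem_def f_L1_def by (simp add: sum_distrib_left[symmetric] sum_over_elements)

lemma f_L1_elem_sq_le:
  assumes k: "k \<in> {1..K}"
  shows "(f_L1_elem k)\<^sup>2 \<le> Hk N idx k * (eps N * (\<Sum>i\<in>elem k. (f i)\<^sup>2))"
proof -
  have "(f_L1_elem k)\<^sup>2 = (eps N)\<^sup>2 * (\<Sum>i\<in>elem k. \<bar>f i\<bar>)\<^sup>2" by (simp add: f_L1_elem_def power_mult_distrib)
  also have "\<dots> \<le> (eps N)\<^sup>2 * (real (card (elem k)) * (\<Sum>i\<in>elem k. (f i)\<^sup>2))"
    by (intro mult_left_mono sum_abs_squared_le_card_mult) auto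
  also have "\<dots> = Hk N idx k * (eps N * (\<Sum>i\<in>elem k. (f i)\<^sup>2))"
    unfolding card_elem[OF k] by (simp add: Hk_eq power2_eq_square)
  finally show ?thesis .
qed

lemma abs_eps_sum_elem_le:
  assumes k: "k \<in> {1..K}" and m: "idx k \<le> m" "m \<le> idx (Suc k)"
    and bound: "\<And>i. i \<in> elem k \<Longrightarrow> \<bar>g i\<bar> \<le> B"
  shows "\<bar>eps N * (\<Sum>i\<in>{idx k..<m}. g i)\<bar> \<le> Hk N idx k * B"
proof -
  have B: "0 \<le> B" using bound[of "idx k"] idx_less[OF k] by force
  have "\<bar>\<Sum>i\<in>{idx k..<m}. g i\<bar> \<le> (\<Sum>i\<in>{idx k..<m}. B)"
    using m by (intro order_trans[OF sum_abs sum_mono] bound) auto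
  then have "\<bar>eps N * (\<Sum>i\<in>{idx k..<m}. g i)\<bar> \<le> (eps N * real_of_int (m - idx k)) * B"
    using m eps_pos by (simp add: abs_mult mult_left_mono)
  also have "\<dots> \<le> Hk N idx k * B"
    using eps_dist_le_Hk[of k m "idx k"] m idx_less[OF k] B by (intro mult_right_mono) auto
  finally show ?thesis .
qed

definition err :: "int \<Rightarrow> real" where
  "err i = utH i - u i"

definition avg_err :: "nat \<Rightarrow> int \<Rightarrow> real" where
  "avg_err k i = stress_mean k * (1 / psi0_mean k - inv_psi0 i)"

definition fluct_err :: "nat \<Rightarrow> int \<Rightarrow> real" where
  "fluct_err k i = (stress_mean k - stress i) * inv_psi0 i"

definition osc_sum :: "int \<Rightarrow> real" where
  "osc_sum j = eps N * (\<Sum>i\<in>{1..<j}. stress i * inv_psi_defect i)"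

definition elem_err :: "nat \<Rightarrow> real" where
  "elem_err k = eps N * (\<Sum>i\<in>elem k. avg_err k i) + eps N * (\<Sum>i\<in>elem k. fluct_err k i)"

lemma err_increment:
  assumes k: "k \<in> {1..K}" and i: "i \<in> elem k"
  shows "err (i+1) - err i = eps N * (avg_err k i + fluct_err k i + stress i * inv_psi_defect i
           + resid_mean / psi0_mean k)"
proof -
  have "err (i+1) - err i = eps N * (Dd N utH i - Dd N u i)"
    using eps_pos by (simp add: err_def Dd_def field_simps)
  also have "Dd N utH i - Dd N u i = slope k - stress i * inv_psi_eps i"
    using Dd_utH_on_elem[OF k i] Dd_u_eq by simp
  also have "\<dots> = avg_err k i + fluct_err k i + stress i * inv_psi_defect i + resid_mean / psi0_mean k"
    unfolding slope_eq[OF k] avg_err_def fluct_err_def inv_psi_defect_def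
    using psi0_mean_pos[OF k] by (simp add: field_simps)
  finally show ?thesis .
qed

lemma err_partial_elem:
  assumes k: "k \<in> {1..K}" and m: "idx k \<le> m" "m \<le> idx (Suc k)"
  shows "err m - err (idx k) = eps N * (\<Sum>i\<in>{idx k..<m}. avg_err k i)
      + eps N * (\<Sum>i\<in>{idx k..<m}. fluct_err k i) + (osc_sum m - osc_sum (idx k))
      + resid_mean * (eps N * real_of_int (m - idx k)) / psi0_mean k"
proof -
  have "err m - err (idx k) = (\<Sum>i\<in>{idx k..<m}. err (i+1) - err i)"
    using sum_int_telescope[OF m(1), of err] by simp
  also have "\<dots> = (\<Sum>i\<in>{idx k..<m}. eps N * (avg_err k i + fluct_err k i
      + stress i * inv_psi_defect i + resid_mean / psi0_mean k))"
    using m by (intro sum.cong) (auto intro: err_increment[OF k])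
  also have "\<dots> = eps N * (\<Sum>i\<in>{idx k..<m}. avg_err k i) + eps N * (\<Sum>i\<in>{idx k..<m}. fluct_err k i)
      + eps N * (\<Sum>i\<in>{idx k..<m}. stress i * inv_psi_defect i)
      + eps N * (\<Sum>i\<in>{idx k..<m}. resid_mean / psi0_mean k)"
    by (simp only: sum.distrib sum_distrib_left[symmetric] distrib_left)
  also have "eps N * (\<Sum>i\<in>{idx k..<m}. stress i * inv_psi_defect i) = osc_sum m - osc_sum (idx k)"
    using sum_int_ivl_split[of 1 "idx k" m "\<lambda>i. stress i * inv_psi_defect i"] idx_range[of k] k m
    by (simp add: osc_sum_def algebra_simps)
  also have "eps N * (\<Sum>i\<in>{idx k..<m}. resid_mean / psi0_mean k)
      = resid_mean * (eps N * real_of_int (m - idx k)) / psi0_mean k"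
    using m by simp
  finally show ?thesis .
qed

lemma err_at_node:
  assumes "1 \<le> k" "k \<le> K+1"
  shows "err (idx k) - err 1
    = (\<Sum>k'\<in>{1..<k}. elem_err k' + resid_mean * Hk N idx k' / psi0_mean k') + osc_sum (idx k)"
  using assms
proof (induction k rule: dec_induct)
  case base then show ?case by (simp add: idx_first[unfolded One_nat_def] osc_sum_def)
next
  case (step k)
  then have k: "k \<in> {1..K}" by auto
  have "err (idx (Suc k)) - err (idx k)
      = elem_err k + (osc_sum (idx (Suc k)) - osc_sum (idx k)) + resid_mean * Hk N idx k / psi0_mean k"
    using err_partial_elem[OF k _ order.refl] idx_less[OF k] by (simp add: elem_err_def Hk_def)
  then show ?case using step by simp
qed

lemma abs_avg_err_partial_le:
  assumes k: "k \<in> {1..K}" and m: "idx k \<le> m" "m \<le> idx (Suc k)"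
  shows "\<bar>eps N * (\<Sum>i\<in>{idx k..<m}. avg_err k i)\<bar> \<le> Hk N idx k * (f_L1 * (C\<^sup>2 * C' / c\<^sup>2 * Hk N idx k / c\<^sup>2))"
proof (rule abs_eps_sum_elem_le[OF k m])
  fix i assume i: "i \<in> elem k"
  have "\<bar>1 / psi0_mean k - inv_psi0 i\<bar> \<le> \<bar>psi0_mean k - psi0 p psi i\<bar> / c\<^sup>2"
    unfolding inv_psi0_eq using psi0_mean_bounds[OF k] psi0_bounds c_pos by (intro abs_inverse_diff_le) auto
  also have "\<dots> \<le> C\<^sup>2 * C' / c\<^sup>2 * Hk N idx k / c\<^sup>2"
    using psi0_mean_near[OF k i] by (intro divide_right_mono) auto
  finally show "\<bar>avg_err k i\<bar> \<le> f_L1 * (C\<^sup>2 * C' / c\<^sup>2 * Hk N idx k / c\<^sup>2)"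
    unfolding avg_err_def abs_mult using abs_stress_mean_le[OF k] by (intro mult_mono) auto
qed

lemma abs_fluct_err_partial_le:
  assumes k: "k \<in> {1..K}" and m: "idx k \<le> m" "m \<le> idx (Suc k)"
  shows "\<bar>eps N * (\<Sum>i\<in>{idx k..<m}. fluct_err k i)\<bar> \<le> Hk N idx k * (f_L1_elem k / c)"
proof (rule abs_eps_sum_elem_le[OF k m])
  fix i assume i: "i \<in> elem k"
  have "\<bar>inv_psi0 i\<bar> \<le> 1 / c" using inv_psi0_bounds(2)[of i] inv_psi0_pos[of i] by simp
  then show "\<bar>fluct_err k i\<bar> \<le> f_L1_elem k / c"
    unfolding fluct_err_def abs_mult using stress_mean_near[OF k i] f_L1_elem_nonneg
    by (metis mult_mono abs_ge_zero times_divide_eq_right mult_1_right)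
qed

text \<open>Over a whole element the first-order parts cancel: \<open>psi0_mean k\<close> is the mean of
  \<open>\<psi>\<^sup>0\<close> and \<open>stress_mean k\<close> that of the stress, so only second-order terms remain.\<close>
lemma abs_avg_err_elem_le:
  assumes k: "k \<in> {1..K}"
  shows "\<bar>eps N * (\<Sum>i\<in>elem k. avg_err k i)\<bar> \<le> Hk N idx k * (f_L1 * ((C\<^sup>2 * C' / c\<^sup>2 * Hk N idx k)\<^sup>2 / c^3))"
proof -
  let ?M = "psi0_mean k" and ?q = "\<lambda>i. (psi0_mean k - psi0 p psi i)\<^sup>2 / (psi0 p psi i * (psi0_mean k)\<^sup>2)"
  have M: "0 < ?M" using psi0_mean_pos[OF k] .
  have dec: "inv_psi0 i - 1 / ?M = (?M - psi0 p psi i) / ?M\<^sup>2 + ?q i" for i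
    using psi0_bounds(1)[of i] c_pos M by (simp add: inv_psi0_eq field_simps power2_eq_square)
  have avg: "avg_err k i = - stress_mean k * ((?M - psi0 p psi i) / ?M\<^sup>2) + - stress_mean k * ?q i" for i
  proof -
    have "avg_err k i = - stress_mean k * (inv_psi0 i - 1 / ?M)" by (simp add: avg_err_def algebra_simps)
    then show ?thesis unfolding dec distrib_left .
  qed
  have "(\<Sum>i\<in>elem k. (?M - psi0 p psi i) / ?M\<^sup>2) = 0"
    using sum_elem_mean_diff[OF k, of "psi0 p psi"] by (simp add: psi0_mean_def sum_divide_distrib[symmetric])
  then have "eps N * (\<Sum>i\<in>elem k. avg_err k i) = - stress_mean k * (eps N * sum ?q (elem k))"
    unfolding avg sum.distrib sum_distrib_left[symmetric] by simp
  then have avg_sum: "\<bar>eps N * (\<Sum>i\<in>elem k. avg_err k i)\<bar> = \<bar>stress_mean k\<bar> * \<bar>eps N * sum ?q (elem k)\<bar>"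
    by (simp only: abs_mult abs_minus_cancel mult_minus_left)
  have q: "\<bar>eps N * sum ?q (elem k)\<bar> \<le> Hk N idx k * ((C\<^sup>2 * C' / c\<^sup>2 * Hk N idx k)\<^sup>2 / c^3)"
  proof (rule abs_eps_sum_elem_le[OF k order_less_imp_le[OF idx_less[OF k]] order.refl])
    fix i assume i: "i \<in> elem k"
    have "c * c \<le> ?M * ?M" using psi0_mean_bounds[OF k] c_pos by (intro mult_mono) auto
    then have "c * (c * c) \<le> psi0 p psi i * (?M * ?M)"
      using psi0_bounds(1)[of i] c_pos by (rule_tac mult_mono) auto
    then have "c^3 \<le> psi0 p psi i * ?M\<^sup>2" by (simp add: power3_eq_cube power2_eq_square)
    moreover have "(?M - psi0 p psi i)\<^sup>2 \<le> (C\<^sup>2 * C' / c\<^sup>2 * Hk N idx k)\<^sup>2"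
    proof -
      have "0 \<le> C\<^sup>2 * C' / c\<^sup>2 * Hk N idx k" using C'_nonneg Hk_pos[OF k] by simp
      then have "\<bar>C\<^sup>2 * C' / c\<^sup>2 * Hk N idx k\<bar> = C\<^sup>2 * C' / c\<^sup>2 * Hk N idx k" by (rule abs_of_nonneg)
      then have "\<bar>?M - psi0 p psi i\<bar> \<le> \<bar>C\<^sup>2 * C' / c\<^sup>2 * Hk N idx k\<bar>"
        using psi0_mean_near[OF k i] by (simp only:)
      then show ?thesis by (simp only: abs_le_square_iff)
    qed
    ultimately show "\<bar>?q i\<bar> \<le> (C\<^sup>2 * C' / c\<^sup>2 * Hk N idx k)\<^sup>2 / c^3"
      using c_pos by (simp add: frac_le)
  qed
  have "\<bar>eps N * (\<Sum>i\<in>elem k. avg_err k i)\<bar>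
      \<le> f_L1 * (Hk N idx k * ((C\<^sup>2 * C' / c\<^sup>2 * Hk N idx k)\<^sup>2 / c^3))"
    unfolding avg_sum using abs_stress_mean_le[OF k] q by (rule mult_mono) (auto simp: f_L1_nonneg)
  then show ?thesis by (simp add: mult_ac)
qed

lemma abs_fluct_err_elem_le:
  assumes k: "k \<in> {1..K}"
  shows "\<bar>eps N * (\<Sum>i\<in>elem k. fluct_err k i)\<bar> \<le> Hk N idx k * (f_L1_elem k * (C' / c\<^sup>2 * Hk N idx k))"
proof -
  have "fluct_err k i = (stress_mean k - stress i) * (inv_psi0 i - inv_psi0 (idx k))
      + (stress_mean k - stress i) * inv_psi0 (idx k)" for i
    by (simp add: fluct_err_def algebra_simps)
  then have "(\<Sum>i\<in>elem k. fluct_err k i)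
      = (\<Sum>i\<in>elem k. (stress_mean k - stress i) * (inv_psi0 i - inv_psi0 (idx k)))
        + (\<Sum>i\<in>elem k. stress_mean k - stress i) * inv_psi0 (idx k)"
    by (simp only: sum.distrib sum_distrib_right)
  also have "(\<Sum>i\<in>elem k. stress_mean k - stress i) = 0"
    unfolding stress_mean_def by (rule sum_elem_mean_diff[OF k])
  finally have eq: "(\<Sum>i\<in>elem k. fluct_err k i)
      = (\<Sum>i\<in>elem k. (stress_mean k - stress i) * (inv_psi0 i - inv_psi0 (idx k)))" by simp
  have pt: "\<bar>(stress_mean k - stress i) * (inv_psi0 i - inv_psi0 (idx k))\<bar>
      \<le> f_L1_elem k * (C' / c\<^sup>2 * Hk N idx k)" if i: "i \<in> elem k" for i
  proof -
    have "\<bar>inv_psi0 i - inv_psi0 (idx k)\<bar> \<le> C' / c\<^sup>2 * (eps N * \<bar>real_of_int (i - idx k)\<bar>)"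
      using inv_psi0_lipschitz by (simp add: mult.assoc)
    also have "\<dots> \<le> C' / c\<^sup>2 * Hk N idx k"
      using eps_dist_le_Hk[of k i "idx k"] i idx_less[OF k] C'_nonneg by (intro mult_left_mono) auto
    finally show ?thesis
      unfolding abs_mult using stress_mean_near[OF k i] by (intro mult_mono) auto
  qed
  show ?thesis unfolding eq
    by (rule abs_eps_sum_elem_le[OF k order_less_imp_le[OF idx_less[OF k]] order.refl pt])
qed

definition coarse_bound :: real where
  "coarse_bound = ((C\<^sup>2 * C' / c\<^sup>2)\<^sup>2 / c^3 + C' / c\<^sup>2) * (Hmax N K idx)\<^sup>2 * f_L1"

definition osc_bound :: real where
  "osc_bound = 2 * eps N * f_L1 * defect_bound"

definition coarse_compliance :: real where
  "coarse_compliance = (\<Sum>k\<in>{1..K}. Hk N idx k / psi0_mean k)"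

definition err_bound :: real where
  "err_bound = coarse_bound + C / c * (coarse_bound + osc_bound)
     + f_L1 * (C\<^sup>2 * C' / c\<^sup>2) * (Hmax N K idx)\<^sup>2 / c\<^sup>2 + osc_bound"

lemma abs_osc_sum_le: "1 \<le> j \<Longrightarrow> j \<le> int N + 1 \<Longrightarrow> \<bar>osc_sum j\<bar> \<le> osc_bound"
  unfolding osc_sum_def osc_bound_def by (rule abs_stress_defect_sum_le)

lemma Hk_sq_le: "k \<in> {1..K} \<Longrightarrow> (Hk N idx k)\<^sup>2 \<le> (Hmax N K idx)\<^sup>2"
  using Hk_pos Hk_le_Hmax by (simp add: power_mono less_imp_le)

lemma abs_elem_err_le:
  assumes k: "k \<in> {1..K}"
  shows "\<bar>elem_err k\<bar> \<le> f_L1 * (C\<^sup>2 * C' / c\<^sup>2)\<^sup>2 / c^3 * (Hmax N K idx)\<^sup>2 * Hk N idx k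
      + C' / c\<^sup>2 * (Hmax N K idx)\<^sup>2 * f_L1_elem k"
proof -
  let ?H = "Hk N idx k" and ?L = "C\<^sup>2 * C' / c\<^sup>2"
  have nn: "0 \<le> f_L1 * ?L\<^sup>2 / c^3 * ?H" "0 \<le> C' / c\<^sup>2 * f_L1_elem k"
    using f_L1_nonneg Hk_pos[OF k] c_pos C'_nonneg f_L1_elem_nonneg by simp_all
  have "\<bar>elem_err k\<bar> \<le> ?H * (f_L1 * ((?L * ?H)\<^sup>2 / c^3)) + ?H * (f_L1_elem k * (C' / c\<^sup>2 * ?H))"
    unfolding elem_err_def using abs_avg_err_elem_le[OF k] abs_fluct_err_elem_le[OF k] by linarith
  also have "\<dots> = (f_L1 * ?L\<^sup>2 / c^3 * ?H) * ?H\<^sup>2 + (C' / c\<^sup>2 * f_L1_elem k) * ?H\<^sup>2"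
    by (simp add: power_mult_distrib power2_eq_square mult_ac)
  also have "\<dots> \<le> (f_L1 * ?L\<^sup>2 / c^3 * ?H) * (Hmax N K idx)\<^sup>2 + (C' / c\<^sup>2 * f_L1_elem k) * (Hmax N K idx)\<^sup>2"
    using Hk_sq_le[OF k] nn by (intro add_mono mult_left_mono)
  finally show ?thesis by (simp add: mult_ac)
qed

lemma sum_abs_elem_err_le: "(\<Sum>k\<in>{1..K}. \<bar>elem_err k\<bar>) \<le> coarse_bound"
proof -
  let ?a = "f_L1 * (C\<^sup>2 * C' / c\<^sup>2)\<^sup>2 / c^3 * (Hmax N K idx)\<^sup>2" and ?b = "C' / c\<^sup>2 * (Hmax N K idx)\<^sup>2"
  have "(\<Sum>k\<in>{1..K}. \<bar>elem_err k\<bar>) \<le> (\<Sum>k\<in>{1..K}. ?a * Hk N idx k + ?b * f_L1_elem k)"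
    by (intro sum_mono abs_elem_err_le)
  also have "\<dots> = ?a * (\<Sum>k\<in>{1..K}. Hk N idx k) + ?b * (\<Sum>k\<in>{1..K}. f_L1_elem k)"
    by (simp add: sum.distrib sum_distrib_left)
  also have "\<dots> = coarse_bound"
    unfolding sum_Hk sum_f_L1_elem coarse_bound_def by (simp add: algebra_simps)
  finally show ?thesis .
qed

lemma coarse_compliance_bounds: "1 / C \<le> coarse_compliance" "coarse_compliance \<le> 1 / c"
proof -
  have "Hk N idx k / C \<le> Hk N idx k / psi0_mean k \<and> Hk N idx k / psi0_mean k \<le> Hk N idx k / c"
    if k: "k \<in> {1..K}" for k
    using psi0_mean_bounds[OF k] psi0_mean_pos[OF k] Hk_pos[OF k] c_pos
    by (auto intro: divide_left_mono)
  then have "(\<Sum>k\<in>{1..K}. Hk N idx k / C) \<le> coarse_compliance"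
    "coarse_compliance \<le> (\<Sum>k\<in>{1..K}. Hk N idx k / c)"
    unfolding coarse_compliance_def by (auto intro: sum_mono)
  then show "1 / C \<le> coarse_compliance" "coarse_compliance \<le> 1 / c"
    by (simp_all only: sum_divide_distrib[symmetric] sum_Hk)
qed

text \<open>Periodicity of the error closes the element-by-element recursion and thereby controls the
  mean of the Galerkin residual.\<close>
lemma abs_resid_mean_le: "\<bar>resid_mean\<bar> \<le> C * (coarse_bound + osc_bound)"
proof -
  have "err (int N + 1) = err 1"
    using u_per utH_mean0 by (simp add: err_def per_def UH_mean0_def UN_mean0_def UN_per_def add.commute)
  then have "0 = (\<Sum>k\<in>{1..K}. elem_err k) + resid_mean * coarse_compliance + osc_sum (int N + 1)"
    using err_at_node[of "K+1"] K_pos idx_last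
    by (simp add: coarse_compliance_def atLeastLessThanSuc_atLeastAtMost sum.distrib sum_distrib_left)
  then have "resid_mean * coarse_compliance = - ((\<Sum>k\<in>{1..K}. elem_err k) + osc_sum (int N + 1))"
    by linarith
  moreover have pos: "0 < coarse_compliance"
    using coarse_compliance_bounds(1) C_pos by (meson divide_pos_pos less_le_trans zero_less_one)
  ultimately have "\<bar>resid_mean\<bar> * coarse_compliance = \<bar>(\<Sum>k\<in>{1..K}. elem_err k) + osc_sum (int N + 1)\<bar>"
    by (metis abs_minus_cancel abs_mult abs_of_pos)
  also have "\<dots> \<le> (\<Sum>k\<in>{1..K}. \<bar>elem_err k\<bar>) + \<bar>osc_sum (int N + 1)\<bar>"
    by (rule order_trans[OF abs_triangle_ineq add_mono[OF sum_abs order.refl]])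
  also have "\<dots> \<le> coarse_bound + osc_bound"
    using sum_abs_elem_err_le abs_osc_sum_le[of "int N + 1"] by simp
  finally have "\<bar>resid_mean\<bar> * coarse_compliance \<le> coarse_bound + osc_bound" .
  moreover have "\<bar>resid_mean\<bar> * (1 / C) \<le> \<bar>resid_mean\<bar> * coarse_compliance"
    using coarse_compliance_bounds(1) by (rule mult_left_mono) simp
  ultimately have "\<bar>resid_mean\<bar> / C \<le> coarse_bound + osc_bound" by simp
  then show ?thesis using C_pos by (simp add: pos_divide_le_eq mult.commute)
qed

lemma partial_compliance_bounds:
  assumes k: "k \<in> {1..K}" and j: "j \<in> elem k"
  shows "0 \<le> (\<Sum>k'\<in>{1..<k}. Hk N idx k' / psi0_mean k') + eps N * real_of_int (j - idx k) / psi0_mean k"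
    and "(\<Sum>k'\<in>{1..<k}. Hk N idx k' / psi0_mean k') + eps N * real_of_int (j - idx k) / psi0_mean k \<le> 1 / c"
proof -
  have nn: "0 \<le> Hk N idx k' / psi0_mean k'" if "k' \<in> {1..K}" for k'
    using Hk_pos[OF that] psi0_mean_pos[OF that] by simp
  have "0 \<le> eps N * real_of_int (j - idx k) / psi0_mean k"
    using eps_pos j psi0_mean_pos[OF k] by simp
  moreover have "eps N * real_of_int (j - idx k) / psi0_mean k \<le> Hk N idx k / psi0_mean k"
    using j eps_pos psi0_mean_pos[OF k] by (intro divide_right_mono) (auto simp: Hk_def)
  moreover have "(\<Sum>k'\<in>{1..<k}. Hk N idx k' / psi0_mean k') + Hk N idx k / psi0_mean k \<le> coarse_compliance"
  proof -
    have "(\<Sum>k'\<in>{1..<k}. Hk N idx k' / psi0_mean k') + Hk N idx k / psi0_mean k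
        = (\<Sum>k'\<in>{1..<Suc k}. Hk N idx k' / psi0_mean k')"
      using k by (simp add: sum.atLeastLessThan_Suc)
    also have "\<dots> \<le> coarse_compliance"
      unfolding coarse_compliance_def using k nn by (intro sum_mono2) auto
    finally show ?thesis .
  qed
  moreover have "0 \<le> (\<Sum>k'\<in>{1..<k}. Hk N idx k' / psi0_mean k')"
    using k nn by (intro sum_nonneg) auto
  ultimately show "0 \<le> (\<Sum>k'\<in>{1..<k}. Hk N idx k' / psi0_mean k') + eps N * real_of_int (j - idx k) / psi0_mean k"
    "(\<Sum>k'\<in>{1..<k}. Hk N idx k' / psi0_mean k') + eps N * real_of_int (j - idx k) / psi0_mean k \<le> 1 / c"
    using coarse_compliance_bounds(2) by linarith+
qed

lemma abs_err_diff_le: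
  assumes k: "k \<in> {1..K}" and j: "j \<in> elem k"
  shows "\<bar>err j - err 1\<bar> \<le> err_bound + Hk N idx k * (f_L1_elem k / c)"
proof -
  define co where "co = (\<Sum>k'\<in>{1..<k}. Hk N idx k' / psi0_mean k') + eps N * real_of_int (j - idx k) / psi0_mean k"
  have "err (idx k) - err 1 = (\<Sum>k'\<in>{1..<k}. elem_err k') + resid_mean * (\<Sum>k'\<in>{1..<k}. Hk N idx k' / psi0_mean k')
      + osc_sum (idx k)"
    using err_at_node[of k] k by (simp add: sum.distrib sum_distrib_left)
  moreover have "err j - err (idx k) = eps N * (\<Sum>i\<in>{idx k..<j}. avg_err k i)
      + eps N * (\<Sum>i\<in>{idx k..<j}. fluct_err k i) + (osc_sum j - osc_sum (idx k))
      + resid_mean * (eps N * real_of_int (j - idx k) / psi0_mean k)"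
    using err_partial_elem[OF k, of j] j by simp
  moreover have "resid_mean * co = resid_mean * (\<Sum>k'\<in>{1..<k}. Hk N idx k' / psi0_mean k')
      + resid_mean * (eps N * real_of_int (j - idx k) / psi0_mean k)"
    by (simp add: co_def distrib_left)
  ultimately have rep: "err j - err 1 = (\<Sum>k'\<in>{1..<k}. elem_err k') + resid_mean * co + osc_sum j
      + eps N * (\<Sum>i\<in>{idx k..<j}. avg_err k i) + eps N * (\<Sum>i\<in>{idx k..<j}. fluct_err k i)"
    by linarith
  have "\<bar>\<Sum>k'\<in>{1..<k}. elem_err k'\<bar> \<le> (\<Sum>k'\<in>{1..K}. \<bar>elem_err k'\<bar>)"
    using k by (intro order_trans[OF sum_abs sum_mono2]) auto
  then have t1: "\<bar>\<Sum>k'\<in>{1..<k}. elem_err k'\<bar> \<le> coarse_bound" using sum_abs_elem_err_le by linarith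
  have "\<bar>resid_mean * co\<bar> \<le> C * (coarse_bound + osc_bound) * (1 / c)"
    unfolding abs_mult co_def using abs_resid_mean_le partial_compliance_bounds[OF k j]
    by (intro mult_mono) auto
  then have t2: "\<bar>resid_mean * co\<bar> \<le> C / c * (coarse_bound + osc_bound)" by simp
  have t3: "\<bar>osc_sum j\<bar> \<le> osc_bound" using elem_in_range[OF k j] by (intro abs_osc_sum_le) auto
  have "Hk N idx k * (f_L1 * (C\<^sup>2 * C' / c\<^sup>2 * Hk N idx k / c\<^sup>2))
      = f_L1 * (C\<^sup>2 * C' / c\<^sup>2) / c\<^sup>2 * (Hk N idx k)\<^sup>2"
    by (simp add: power2_eq_square mult_ac)
  also have "\<dots> \<le> f_L1 * (C\<^sup>2 * C' / c\<^sup>2) / c\<^sup>2 * (Hmax N K idx)\<^sup>2"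
    using Hk_sq_le[OF k] f_L1_nonneg C'_nonneg by (intro mult_left_mono) auto
  finally have t4: "\<bar>eps N * (\<Sum>i\<in>{idx k..<j}. avg_err k i)\<bar>
      \<le> f_L1 * (C\<^sup>2 * C' / c\<^sup>2) * (Hmax N K idx)\<^sup>2 / c\<^sup>2"
    using abs_avg_err_partial_le[OF k, of j] j by simp
  have t5: "\<bar>eps N * (\<Sum>i\<in>{idx k..<j}. fluct_err k i)\<bar> \<le> Hk N idx k * (f_L1_elem k / c)"
    using abs_fluct_err_partial_le[OF k, of j] j by simp
  show ?thesis unfolding rep err_bound_def using t1 t2 t3 t4 t5 by linarith
qed

lemma err_bound_eq:
  "err_bound = f_L1 * ((((C\<^sup>2 * C' / c\<^sup>2)\<^sup>2 / c^3 + C' / c\<^sup>2) * (1 + C / c) + C\<^sup>2 * C' / c\<^sup>2 / c\<^sup>2)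
      * (Hmax N K idx)\<^sup>2 + 2 * defect_bound * (1 + C / c) * eps N)"
  unfolding err_bound_def coarse_bound_def osc_bound_def using c_pos by (simp add: field_simps)

lemma err_bound_nonneg: "0 \<le> err_bound"
  unfolding err_bound_eq defect_bound_def using f_L1_nonneg c_pos C_pos C'_nonneg eps_pos by simp

lemma sum_elem_err_sq_le:
  assumes k: "k \<in> {1..K}"
  shows "eps N * (\<Sum>j\<in>elem k. (err j - err 1)\<^sup>2)
    \<le> Hk N idx k * (2 * err_bound\<^sup>2) + 2 * (Hmax N K idx)^4 / c\<^sup>2 * (eps N * (\<Sum>i\<in>elem k. (f i)\<^sup>2))"
proof -
  let ?H = "Hk N idx k" and ?a = "Hk N idx k * (f_L1_elem k / c)" and ?F = "eps N * (\<Sum>i\<in>elem k. (f i)\<^sup>2)"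
  have a: "0 \<le> ?a" using Hk_pos[OF k] f_L1_elem_nonneg c_pos by simp
  have "(err j - err 1)\<^sup>2 \<le> 2 * err_bound\<^sup>2 + 2 * ?a\<^sup>2" if "j \<in> elem k" for j
  proof -
    have "(err j - err 1)\<^sup>2 \<le> (err_bound + ?a)\<^sup>2"
      using abs_err_diff_le[OF k that] err_bound_nonneg a
      by (metis abs_le_square_iff abs_of_nonneg add_nonneg_nonneg)
    also have "\<dots> \<le> 2 * err_bound\<^sup>2 + 2 * ?a\<^sup>2"
      using zero_le_power2[of "err_bound - ?a"] by (simp add: power2_eq_square algebra_simps)
    finally show ?thesis .
  qed
  then have "eps N * (\<Sum>j\<in>elem k. (err j - err 1)\<^sup>2) \<le> eps N * (\<Sum>j\<in>elem k. 2 * err_bound\<^sup>2 + 2 * ?a\<^sup>2)"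
    using eps_pos by (intro mult_left_mono sum_mono) auto
  also have "\<dots> = ?H * (2 * err_bound\<^sup>2) + 2 * (?H * ?a\<^sup>2)"
    unfolding sum_const_elem[OF k] by (simp add: Hk_eq algebra_simps)
  also have "?H * ?a\<^sup>2 = ?H^3 / c\<^sup>2 * (f_L1_elem k)\<^sup>2"
    by (simp add: power2_eq_square power3_eq_cube)
  also have "\<dots> \<le> ?H^3 / c\<^sup>2 * (?H * ?F)"
    using f_L1_elem_sq_le[OF k] Hk_pos[OF k] by (intro mult_left_mono) auto
  also have "\<dots> = ?H^4 / c\<^sup>2 * ?F"
    by (simp add: power_numeral_reduce)
  also have "\<dots> \<le> (Hmax N K idx)^4 / c\<^sup>2 * ?F"
    using Hk_pos[OF k] Hk_le_Hmax[OF k] eps_pos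
    by (intro mult_right_mono divide_right_mono power_mono) (auto simp: sum_nonneg)
  finally show ?thesis by simp
qed

lemma sum_err_sq_le:
  "eps N * (\<Sum>j\<in>{1..<int N+1}. (err j - err 1)\<^sup>2) \<le> 2 * err_bound\<^sup>2 + 2 * (Hmax N K idx)^4 * (normX N f)\<^sup>2 / c\<^sup>2"
proof -
  have "eps N * (\<Sum>j\<in>{1..<int N+1}. (err j - err 1)\<^sup>2) = (\<Sum>k\<in>{1..K}. eps N * (\<Sum>j\<in>elem k. (err j - err 1)\<^sup>2))"
    by (simp add: sum_over_elements sum_distrib_left)
  also have "\<dots> \<le> (\<Sum>k\<in>{1..K}. Hk N idx k * (2 * err_bound\<^sup>2)
      + 2 * (Hmax N K idx)^4 / c\<^sup>2 * (eps N * (\<Sum>i\<in>elem k. (f i)\<^sup>2)))"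
    by (intro sum_mono sum_elem_err_sq_le)
  also have "\<dots> = (\<Sum>k\<in>{1..K}. Hk N idx k) * (2 * err_bound\<^sup>2)
      + 2 * (Hmax N K idx)^4 / c\<^sup>2 * (eps N * (\<Sum>k\<in>{1..K}. \<Sum>i\<in>elem k. (f i)\<^sup>2))"
    by (simp only: sum.distrib sum_distrib_right sum_distrib_left)
  also have "\<dots> = 2 * err_bound\<^sup>2 + 2 * (Hmax N K idx)^4 / c\<^sup>2 * (eps N * (\<Sum>i\<in>{1..<int N+1}. (f i)\<^sup>2))"
    by (simp only: sum_Hk sum_over_elements mult_1_left)
  also have "eps N * (\<Sum>i\<in>{1..<int N+1}. (f i)\<^sup>2) = (normX N f)\<^sup>2"
    unfolding normX_eq_sqrt using eps_pos by (simp add: sum_nonneg)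
  finally show ?thesis by simp
qed

lemma normX_err_le:
  "normX N err \<le> (error_const_H c C C' * (Hmax N K idx)\<^sup>2 + error_const_eps p c C C' * eps N) * normX N f"
proof -
  let ?H = "Hmax N K idx" and ?nf = "normX N f"
  have nf: "0 \<le> ?nf" using eps_pos by (simp add: normX_eq_sqrt sum_nonneg)
  have X: "0 \<le> 2 * err_bound + 2 * (?H\<^sup>2 * ?nf / c)" using err_bound_nonneg nf c_pos by simp
  have "avgX N utH = 0" "avgX N u = 0" using utH_mean0 u_mean0 by (simp_all add: UH_mean0_def UN_mean0_def)
  then have "avgX N err = 0" by (auto simp: avgX_def err_def sum_subtractf)
  have "(normX N err)\<^sup>2 = eps N * (\<Sum>j\<in>{1..<int N+1}. (err j)\<^sup>2)"
    unfolding normX_eq_sqrt using eps_pos by (simp add: sum_nonneg)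
  also have "\<dots> \<le> eps N * (\<Sum>j\<in>{1..<int N+1}. (err j - err 1)\<^sup>2)"
    using ipX_self_le_of_avgX_0[OF \<open>avgX N err = 0\<close>, of "err 1"]
    by (simp add: ipX_eq_eps_sum power2_eq_square)
  also have "\<dots> \<le> 2 * err_bound\<^sup>2 + 2 * ?H^4 * ?nf\<^sup>2 / c\<^sup>2"
    by (rule sum_err_sq_le)
  also have "\<dots> = 2 * err_bound\<^sup>2 + 2 * (?H\<^sup>2 * ?nf / c)\<^sup>2"
    by (simp add: power_divide power_mult_distrib power_mult[symmetric])
  also have "\<dots> \<le> (2 * err_bound + 2 * (?H\<^sup>2 * ?nf / c))\<^sup>2"
  proof -
    have sq: "2 * a\<^sup>2 + 2 * b\<^sup>2 \<le> (2 * a + 2 * b)\<^sup>2" if "0 \<le> a" "0 \<le> b" for a b :: real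
      using mult_nonneg_nonneg[OF that] by (simp add: power2_eq_square algebra_simps)
    show ?thesis by (rule sq) (use err_bound_nonneg nf c_pos in simp_all)
  qed
  finally have "normX N err \<le> 2 * err_bound + 2 * (?H\<^sup>2 * ?nf / c)"
    by (rule power2_le_imp_le[OF _ X])
  also have "\<dots> \<le> (error_const_H c C C' * ?H\<^sup>2 + error_const_eps p c C C' * eps N) * ?nf"
  proof -
    let ?k = "(((C\<^sup>2 * C' / c\<^sup>2)\<^sup>2 / c^3 + C' / c\<^sup>2) * (1 + C / c) + C\<^sup>2 * C' / c\<^sup>2 / c\<^sup>2) * ?H\<^sup>2
      + 2 * defect_bound * (1 + C / c) * eps N"
    have k: "0 \<le> ?k" unfolding defect_bound_def using c_pos C_pos C'_nonneg eps_pos by simp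
    have "err_bound \<le> ?nf * ?k" unfolding err_bound_eq using f_L1_le_normX k by (rule mult_right_mono)
    moreover have "(error_const_H c C C' * ?H\<^sup>2 + error_const_eps p c C C' * eps N) * ?nf
        = 2 * (?nf * ?k) + 2 * (?H\<^sup>2 * ?nf / c)"
      unfolding error_const_H_def error_const_eps_def defect_bound_def by (simp add: algebra_simps)
    ultimately show ?thesis by linarith
  qed
  finally show ?thesis .
qed

end

text \<open>Likewise \<open>\<langle>f\<rangle>\<^sub>X = 0\<close> is implied by the
  solvability of the atomistic problem.\<close>
theorem theorem6p2:
  fixes p :: nat and c_psi C_psi C'_psi :: real
  assumes "1 \<le> p" and "0 < c_psi"
  shows "\<exists>C6 C7 :: real. \<forall>(N::nat) (psi :: int \<Rightarrow> int \<Rightarrow> real) (f :: int \<Rightarrow> real)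
      (K::nat) (idx :: nat \<Rightarrow> int) (rep :: nat \<Rightarrow> int) (coll :: nat \<Rightarrow> int)
      (u :: int \<Rightarrow> real) (uH :: int \<Rightarrow> real) (utH :: int \<Rightarrow> real).
     1 \<le> N \<and> p dvd N \<and>
     two_scale N p psi \<and>
     (\<forall>i j. c_psi \<le> psi i j \<and> psi i j \<le> C_psi) \<and>
     Linf_Np N p (DX N psi) \<le> C'_psi \<and>
     UN_per N f \<and> avgX N f = 0 \<and>
     mesh N K idx \<and> sampling p K idx rep coll \<and>
     UN_mean0 N u \<and>
     (\<forall>v. UN_per N v \<longrightarrow> ipX N (\<lambda>i. psi_eps psi i * Dd N u i) (Dd N v) = ipX N f v) \<and>
     UH_mean0 N K idx uH \<and>
     (\<forall>v. UH_mean0 N K idx v \<longrightarrow> hqc_form N p K psi idx rep coll uH v = ipX N f v) \<and>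
     UH_mean0 N K idx utH \<and>
     (\<forall>v. UH_mean0 N K idx v \<longrightarrow> ipX N (\<lambda>i. psi0 p psi i * Dd N utH i) (Dd N v) = ipX N f v)
     \<longrightarrow> normX N (\<lambda>i. uH i - u i)
           \<le> (C6 * (Hmax N K idx)\<^sup>2 + C7 * eps N) * normX N f + normX N (\<lambda>i. uH i - utH i)"
proof (rule exI[of _ "error_const_H c_psi C_psi C'_psi"], rule exI[of _ "error_const_eps p c_psi C_psi C'_psi"],
    intro allI impI, goal_cases)
  case (1 N psi f K idx rep coll u uH utH)
  interpret homogenized_error N p c_psi C_psi C'_psi psi f u K idx utH
    using 1 assms by unfold_locales auto
  have "normX N (\<lambda>i. uH i - u i) \<le> normX N (\<lambda>i. uH i - utH i) + normX N err"
    using normX_diff_triangle[of N uH u utH] unfolding err_def[abs_def] .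
  then show ?case using normX_err_le by linarith
qed

end
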